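(* Let $n$ be a positive integer. Let $\alpha,\gamma>0$ be real and $0<\mu\leqq 1$, and suppose that $$\alpha=\beta+\frac{2}{\pi}\arctan(n\beta),\qquad \beta=\gamma+\frac{2}{\pi}\arctan(n\gamma),\qquad \frac{\pi}{2}(\alpha+\gamma)\leqq\phi(\mu),$$ where $$\phi(\mu)=\frac{\pi}{2}(\mu+1)-\arctan\frac{\cos\frac{\mu\pi}{2}}{\sin\frac{\mu\pi}{2}+\frac{n\mu}{1-\mu}\left(\frac{1-\mu}{1+\mu}\right)^{\frac{1+\mu}{2}}}.$$ If $f(z)\in\mathcal{A}_n$ satisfies $$|\arg(f'(z)+zf''(z))|<\frac{\pi}{2}\alpha\qquad(z\in\mathbb{U}),$$ then $f(z)\in\mathcal{STS}(\mu)$, i.e. $\left|\arg\left(\frac{zf'(z)}{f(z)}\right)\right|<\frac{\pi}{2}\mu$ for all $z\in\mathbb{U}$.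
   Context: $\mathbb{U}=\{z\in\mathbb{C}:|z|<1\}$. For a positive integer $n$, $\mathcal{A}_n$ is the class of functions $f(z)=z+a_{n+1}z^{n+1}+a_{n+2}z^{n+2}+\cdots$ analytic in $\mathbb{U}$. For $0<\mu\leqq1$, $\mathcal{STS}(\mu)=\{f\in\mathcal{A}_n:\left|\arg\left(\frac{zf'(z)}{f(z)}\right)\right|<\frac{\pi}{2}\mu \text{ for } z\in\mathbb{U}\}$. $\arg$ denotes the principal argument. *)

theory Defs
  imports "HOL-Complex_Analysis.Complex_Analysis"
begin

text \<open>The class A_n: f analytic in the unit disc with f(z) = z + a_{n+1} z^{n+1} + ...,
  i.e. f(0) = 0, f'(0) = 1 and the k-th derivatives at 0 vanish for 2 <= k <= n.\<close>
definition class_A :: "nat \<Rightarrow> (complex \<Rightarrow> complex) set" where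
  "class_A n = {f. f holomorphic_on ball 0 1 \<and> f 0 = 0 \<and> deriv f 0 = 1 \<and>
                   (\<forall>k\<in>{2..n}. (deriv ^^ k) f 0 = 0)}"

text \<open>Strongly starlike of order mu. The quotient z f'(z)/f(z) must be defined and have an
  argument (nonzero) at every point z of U other than 0 (at z = 0 it equals 1 by continuity).\<close>
definition STS :: "nat \<Rightarrow> real \<Rightarrow> (complex \<Rightarrow> complex) set" where
  "STS n \<mu> = {f \<in> class_A n. \<forall>z\<in>ball 0 1. z \<noteq> 0 \<longrightarrow>
       f z \<noteq> 0 \<and> z * deriv f z / f z \<noteq> 0 \<and> \<bar>Arg (z * deriv f z / f z)\<bar> < pi / 2 * \<mu>}"

definition phi :: "nat \<Rightarrow> real \<Rightarrow> real" where
  "phi n \<mu> = pi / 2 * (\<mu> + 1) -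
     arctan (cos (\<mu> * pi / 2) /
       (sin (\<mu> * pi / 2) + real n * \<mu> / (1 - \<mu>) * ((1 - \<mu>) / (1 + \<mu>)) powr ((1 + \<mu>) / 2)))"

end

theory Submission
  imports Defs
begin

text \<open>
  Write f(z) = z p(z) with p = 1 + z^n h; then f' = p r with r = z f'/f, and
  f' + z f'' = p (r^2 + z r'). Nunokawa's lemma, a sharpened form of Jack's lemma, says: if a function
  1 + z^n q leaves the sector |arg w| < \<pi>\<delta>/2 somewhere in the disc, then at a first exit point z0 its
  value is a^\<delta> e^(\<plusminus>i\<pi>\<delta>/2), and z0 times its logarithmic derivative is \<plusminus>i k \<delta> with
  k \<ge> n (a + 1/a)/2. It is applied in turn to f', p and r, with \<delta> = \<beta>, \<gamma>, \<mu>: at an exit point the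
  argument of f' + z f'' (for f' and r), resp. of f' = p + z p' (for p), would reach \<pi>\<alpha>/2, resp.
  \<pi>\<beta>/2, contradicting what is already known. For r this is where \<pi>(\<alpha> + \<gamma>)/2 \<le> \<phi>(\<mu>) enters:
  \<phi> is the bound obtained from k \<ge> n (a + 1/a)/2 by a weighted AM-GM inequality.
  Nunokawa's lemma itself follows from Jack's lemma for the Cayley transform of p^(1/\<delta>), which has a
  zero of order n at 0; the power is taken through a logarithm of p on a starlike neighbourhood of the
  disc |z| < |z0| together with z0.
\<close>

section \<open>Sectors\<close>

text \<open>The open sector |arg w| < c, written with the cosine to avoid the branch cut of Arg.\<close>

definition sector :: "real \<Rightarrow> complex set" where
  "sector c = {w. cmod w * cos c < Re w}"

lemma sector_nonzero: "w \<in> sector c \<Longrightarrow> w \<noteq> 0"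
  by (auto simp: sector_def)

lemma open_sector: "open (sector c)"
  unfolding sector_def by (intro open_Collect_less continuous_intros)

lemma closed_sector_le: "closed {w. cmod w * cos c \<le> Re w}"
  by (intro closed_Collect_le continuous_intros)

lemma closed_sector_scale:
  assumes "cmod v * cos c \<le> Re v" "0 < s"
  shows "cmod (v / of_real s) * cos c \<le> Re (v / of_real s)"
  using divide_right_mono[OF assms(1), of s] assms(2) by (simp add: norm_divide)

lemma mem_sector_iff_Arg:
  assumes "0 < c" "c \<le> pi"
  shows "w \<in> sector c \<longleftrightarrow> w \<noteq> 0 \<and> \<bar>Arg w\<bar> < c"
proof (cases "w = 0")
  case False
  have "Re w = cmod w * cos \<bar>Arg w\<bar>"
    using cos_Arg[OF False] False by (cases "Arg w \<ge> 0") auto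
  moreover have "cos c < cos \<bar>Arg w\<bar> \<longleftrightarrow> \<bar>Arg w\<bar> < c"
    using cos_mono_less_eq[of c "\<bar>Arg w\<bar>"] Arg_bounded[of w] assms by auto
  ultimately show ?thesis
    using False by (simp add: sector_def)
qed (simp add: sector_def)

section \<open>Jack's lemma\<close>

lemma has_real_derivative_norm_power2:
  fixes w :: "real \<Rightarrow> complex"
  assumes "(w has_vector_derivative w') (at x)"
  shows "((\<lambda>t. (cmod (w t))\<^sup>2) has_real_derivative 2 * Re (cnj (w x) * w')) (at x)"
proof -
  have "((\<lambda>t. w t * cnj (w t)) has_vector_derivative w x * cnj w' + w' * cnj (w x)) (at x)"
    by (rule has_vector_derivative_mult[OF assms has_vector_derivative_cnj[OF assms]])
  then have "((\<lambda>t. Re (w t * cnj (w t))) has_vector_derivative Re (w x * cnj w' + w' * cnj (w x))) (at x)"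
    by (rule bounded_linear.has_vector_derivative[OF bounded_linear_Re])
  moreover have "(\<lambda>t. Re (w t * cnj (w t))) = (\<lambda>t. (cmod (w t))\<^sup>2)"
    by (rule ext, subst cmod_power2) (simp add: power2_eq_square)
  ultimately show ?thesis
    by (simp add: has_real_derivative_iff_has_vector_derivative algebra_simps)
qed

lemma jack_radial:
  fixes w :: "complex \<Rightarrow> complex"
  assumes der: "(w has_field_derivative w') (at z0)" and w0: "cmod (w z0) = 1"
    and rad: "\<forall>\<^sub>F t in at_left 1. cmod (w (of_real t * z0)) \<le> t ^ n"
  shows "real n \<le> Re (z0 * w' / w z0)"
proof (rule ccontr)
  assume less: "\<not> ?thesis"
  have "cnj (w z0) = 1 / w z0"
    using complex_div_cnj[of 1 "w z0"] w0 by simp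
  then have key: "cnj (w z0) * (w' * z0) = z0 * w' / w z0"
    by simp
  have "((\<lambda>x. x * z0) has_field_derivative z0) (at 1)"
    by (rule derivative_eq_intros | simp)+
  then have "((\<lambda>x. w (x * z0)) has_field_derivative w' * z0) (at (of_real 1))"
    using DERIV_chain2[where f=w and g="\<lambda>x. x * z0"] der by simp
  then have "((\<lambda>t. w (of_real t * z0)) has_vector_derivative w' * z0) (at 1)"
    using has_vector_derivative_real_field by fastforce
  \<comment> \<open>t^(2n) - |w(t z0)|^2 is nonnegative just left of 1 and vanishes at 1\<close>
  from has_real_derivative_norm_power2[OF this]
  have "((\<lambda>t. (cmod (w (of_real t * z0)))\<^sup>2) has_real_derivative 2 * Re (z0 * w' / w z0)) (at 1)"
    using key by simp
  from DERIV_diff[OF DERIV_pow this]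
  have H: "((\<lambda>t. t ^ (2 * n) - (cmod (w (of_real t * z0)))\<^sup>2) has_real_derivative
          real (2 * n) * 1 ^ (2 * n - Suc 0) - 2 * Re (z0 * w' / w z0)) (at 1)" .
  have "0 < real (2 * n) * 1 ^ (2 * n - Suc 0) - 2 * Re (z0 * w' / w z0)"
    using less by simp
  from DERIV_pos_inc_left[OF H this] obtain d where "d > 0"
    and d: "\<And>h. 0 < h \<Longrightarrow> h < d \<Longrightarrow>
      (1 - h) ^ (2 * n) - (cmod (w (of_real (1 - h) * z0)))\<^sup>2 < 1 ^ (2 * n) - (cmod (w (of_real 1 * z0)))\<^sup>2"
    by blast
  have "\<forall>\<^sub>F t in at_left 1. t \<in> {1 - d<..<1}"
    using \<open>d > 0\<close> by (intro eventually_at_left_real) auto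
  then have "\<forall>\<^sub>F t in at_left 1. t \<in> {1 - d<..<1} \<and> cmod (w (of_real t * z0)) \<le> t ^ n"
    using rad by (rule eventually_conj)
  then obtain t where t: "t \<in> {1 - d<..<1}" and wt: "cmod (w (of_real t * z0)) \<le> t ^ n"
    using eventually_happens'[OF trivial_limit_at_left_real] by blast
  have "(cmod (w (of_real t * z0)))\<^sup>2 \<le> (t ^ n)\<^sup>2"
    using wt by (intro power_mono) simp_all
  then have "(cmod (w (of_real t * z0)))\<^sup>2 \<le> t ^ (2 * n)"
    by (simp add: power_mult[symmetric] mult.commute)
  moreover have "t ^ (2 * n) - (cmod (w (of_real t * z0)))\<^sup>2 < 0"
    using d[of "1 - t"] t w0 by simp
  ultimately show False
    by simp
qed

lemma jack_tangential:
  fixes w :: "complex \<Rightarrow> complex"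
  assumes der: "(w has_field_derivative w') (at z0)" and w0: "cmod (w z0) = 1"
    and tan: "\<forall>\<^sub>F s in at 0. cmod (w (z0 * cis s)) \<le> 1"
  shows "Im (z0 * w' / w z0) = 0"
proof -
  have "cnj (w z0) = 1 / w z0"
    using complex_div_cnj[of 1 "w z0"] w0 by simp
  then have key: "cnj (w (z0 * exp (\<i> * of_real 0))) * (w' * (z0 * \<i>)) = \<i> * (z0 * w' / w z0)"
    by simp
  have "((\<lambda>x. z0 * exp (\<i> * x)) has_field_derivative z0 * \<i>) (at 0)"
    by (rule derivative_eq_intros refl | simp)+
  then have "((\<lambda>x. w (z0 * exp (\<i> * x))) has_field_derivative w' * (z0 * \<i>)) (at (of_real 0))"
    using DERIV_chain2[where f=w and g="\<lambda>x. z0 * exp (\<i> * x)"] der by simp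
  then have "((\<lambda>s. w (z0 * exp (\<i> * of_real s))) has_vector_derivative w' * (z0 * \<i>)) (at 0)"
    using has_vector_derivative_real_field by fastforce
  from has_real_derivative_norm_power2[OF this]
  have D: "((\<lambda>s. (cmod (w (z0 * exp (\<i> * of_real s))))\<^sup>2) has_real_derivative
      2 * Re (\<i> * (z0 * w' / w z0))) (at 0)"
    unfolding key .
  \<comment> \<open>|w(z0 e^(is))|^2 has a local maximum at s = 0\<close>
  obtain d where "d > 0" and d: "\<And>s. s \<noteq> 0 \<Longrightarrow> dist s 0 < d \<Longrightarrow> cmod (w (z0 * cis s)) \<le> 1"
    using tan unfolding eventually_at by auto
  have "2 * Re (\<i> * (z0 * w' / w z0)) = 0"
  proof (rule DERIV_local_max[OF D \<open>d > 0\<close>], intro allI impI)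
    fix s :: real
    assume "\<bar>0 - s\<bar> < d"
    then have "cmod (w (z0 * cis s)) \<le> 1"
      using d[of s] w0 by (cases "s = 0") auto
    then show "(cmod (w (z0 * exp (\<i> * of_real s))))\<^sup>2 \<le> (cmod (w (z0 * exp (\<i> * of_real 0))))\<^sup>2"
      using w0 by (simp add: cis_conv_exp power_le_one)
  qed
  then show ?thesis
    using Re_i_times[of "z0 * w' / w z0"] by linarith
qed

lemma schwarz_power_bound:
  fixes v :: "complex \<Rightarrow> complex"
  assumes "0 < r" and hol: "v holomorphic_on ball 0 r"
    and bd: "\<And>z. z \<in> ball 0 r \<Longrightarrow> cmod (z ^ n * v z) \<le> 1"
    and z: "z \<in> ball 0 r"
  shows "cmod (v z) \<le> 1 / r ^ n"
proof -
  have on_circle: "cmod (v z) \<le> 1 / \<rho> ^ n" if "cmod z < \<rho>" "\<rho> < r" for \<rho>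
  proof -
    have "0 < \<rho>"
      using that norm_ge_zero[of z] by linarith
    have sub: "cball 0 \<rho> \<subseteq> ball 0 r"
      using that by auto
    show ?thesis
    proof (rule maximum_modulus_frontier[of v "ball 0 \<rho>"])
      show "v holomorphic_on interior (ball 0 \<rho>)"
        using holomorphic_on_subset[OF hol subset_ball] that by simp
      show "continuous_on (closure (ball 0 \<rho>)) v"
        using sub \<open>0 < \<rho>\<close> by (auto intro: continuous_on_subset[OF holomorphic_on_imp_continuous_on[OF hol]])
      fix \<zeta> :: complex
      assume "\<zeta> \<in> frontier (ball 0 \<rho>)"
      then have "cmod \<zeta> = \<rho>" "\<zeta> \<in> ball 0 r"
        using that \<open>0 < \<rho>\<close> by auto
      then have "\<rho> ^ n * cmod (v \<zeta>) \<le> 1"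
        using bd by (metis norm_mult norm_power)
      then show "cmod (v \<zeta>) \<le> 1 / \<rho> ^ n"
        using \<open>0 < \<rho>\<close> by (simp add: field_simps)
    qed (use that in auto)
  qed
  have "((\<lambda>\<rho>. 1 / \<rho> ^ n) \<longlongrightarrow> 1 / r ^ n) (at_left r)"
    using \<open>0 < r\<close> by (intro tendsto_intros) auto
  moreover have "\<forall>\<^sub>F \<rho> in at_left r. cmod (v z) \<le> 1 / \<rho> ^ n"
    using z eventually_at_left_real[of "cmod z" r] by (auto elim!: eventually_mono intro: on_circle)
  ultimately show ?thesis
    using tendsto_le[OF trivial_limit_at_left_real _ tendsto_const] by blast
qed

lemma jack_lemma:
  fixes W v :: "complex \<Rightarrow> complex"
  assumes "0 < r" "cmod z0 = r" and v: "v holomorphic_on ball 0 r"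
    and Wv: "\<And>z. z \<in> ball 0 r \<Longrightarrow> W z = z ^ n * v z \<and> cmod (W z) \<le> 1"
    and der: "(W has_field_derivative W') (at z0)" and W0: "cmod (W z0) = 1"
    and tan: "\<forall>\<^sub>F s in at 0. cmod (W (z0 * cis s)) \<le> 1"
  shows "Im (z0 * W' / W z0) = 0 \<and> real n \<le> Re (z0 * W' / W z0)"
proof
  show "Im (z0 * W' / W z0) = 0"
    by (rule jack_tangential[OF der W0 tan])
  have "cmod (W (of_real t * z0)) \<le> t ^ n" if "0 < t" "t < 1" for t
  proof -
    have z: "of_real t * z0 \<in> ball 0 r" "cmod (of_real t * z0) = t * r"
      using that assms(1,2) by (auto simp: norm_mult)
    have "cmod (v (of_real t * z0)) \<le> 1 / r ^ n"
      using schwarz_power_bound[OF \<open>0 < r\<close> v _ z(1)] Wv by metis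
    have "cmod (W (of_real t * z0)) = (t * r) ^ n * cmod (v (of_real t * z0))"
      using Wv[OF z(1)] z(2) by (simp add: norm_mult norm_power)
    also have "\<dots> \<le> (t * r) ^ n * (1 / r ^ n)"
      using \<open>cmod (v _) \<le> _\<close> that \<open>0 < r\<close> by (intro mult_left_mono) auto
    also have "\<dots> = t ^ n"
      using \<open>0 < r\<close> by (simp add: power_mult_distrib)
    finally show ?thesis .
  qed
  then have "\<forall>\<^sub>F t in at_left 1. cmod (W (of_real t * z0)) \<le> t ^ n"
    using eventually_at_left_real[of 0 1] by (auto elim!: eventually_mono)
  then show "real n \<le> Re (z0 * W' / W z0)"
    by (rule jack_radial[OF der W0])
qed

section \<open>The first exit from a sector\<close>

lemma first_exit_point:
  fixes F :: "'a::{real_normed_vector,heine_borel} \<Rightarrow> 'b::topological_space"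
  assumes F: "continuous_on (ball 0 R) F" and "open S" and z1: "z1 \<in> ball 0 R" "F z1 \<notin> S"
  obtains z0 where "z0 \<in> ball 0 R" "F z0 \<notin> S" "\<And>z. norm z < norm z0 \<Longrightarrow> F z \<in> S"
proof -
  define K where "K = cball 0 (norm z1) \<inter> F -` (- S)"
  have sub: "cball 0 (norm z1) \<subseteq> ball 0 R"
    using z1 by auto
  have "closed K"
    unfolding K_def using continuous_on_subset[OF F sub] \<open>open S\<close>
    by (intro continuous_closed_preimage) auto
  then have "compact K"
    by (simp add: K_def compact_eq_bounded_closed bounded_Int)
  moreover have "z1 \<in> K"
    using z1 by (simp add: K_def)
  ultimately obtain z0 where z0: "z0 \<in> K" and min: "\<And>z. z \<in> K \<Longrightarrow> norm z0 \<le> norm z"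
    using continuous_attains_inf[of K norm] continuous_on_norm_id by blast
  show ?thesis
  proof (rule that)
    show "z0 \<in> ball 0 R" "F z0 \<notin> S"
      using z0 z1 by (auto simp: K_def)
    show "F z \<in> S" if "norm z < norm z0" for z
      using min[of z] that z0 by (force simp: K_def)
  qed
qed

lemma radial_limit_in_closed:
  fixes F :: "complex \<Rightarrow> 'b::topological_space"
  assumes "continuous_on D F" "open D" "z \<in> D" "0 < cmod z" "closed T"
    and "\<And>w. w \<in> D \<Longrightarrow> cmod w < cmod z \<Longrightarrow> F w \<in> T"
  shows "F z \<in> T"
proof -
  have "((\<lambda>t. of_real t * z) \<longlongrightarrow> of_real 1 * z) (at_left (1::real))"
    by (intro tendsto_intros)
  then have lim1: "((\<lambda>t. of_real t * z) \<longlongrightarrow> z) (at_left 1)"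
    by simp
  have "isCont F z"
    using assms(1-3) continuous_on_eq_continuous_at by blast
  then have lim2: "((\<lambda>t. F (of_real t * z)) \<longlongrightarrow> F z) (at_left 1)"
    using isCont_tendsto_compose lim1 by blast
  have "\<forall>\<^sub>F t in at_left 1. of_real t * z \<in> D \<and> 0 < t \<and> t < 1"
    using topological_tendstoD[OF lim1 assms(2,3)] eventually_at_left_real[of 0 1]
    by (auto elim: eventually_elim2)
  then have "\<forall>\<^sub>F t in at_left 1. F (of_real t * z) \<in> T"
    by (rule eventually_mono) (use assms(4,6) in \<open>auto simp: norm_mult\<close>)
  then show ?thesis
    using Lim_in_closed_set[OF assms(5) _ trivial_limit_at_left_real lim2] by blast
qed

lemma norm_one_minus_cis_less_one:
  assumes "0 < t" "t < 2 * cos \<theta>"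
  shows "cmod (1 - of_real t * cis \<theta>) < 1"
proof -
  have "(cmod (1 - of_real t * cis \<theta>))\<^sup>2 = (1 - t * cos \<theta>)\<^sup>2 + (t * sin \<theta>)\<^sup>2"
    by (simp add: cmod_power2)
  also have "\<dots> = (1 - t * cos \<theta>)\<^sup>2 + (t\<^sup>2 - (t * cos \<theta>)\<^sup>2)"
    by (simp add: sin_squared_eq algebra_simps)
  also have "\<dots> = 1 - t * (2 * cos \<theta> - t)"
    by (simp add: power2_eq_square algebra_simps)
  also have "\<dots> < 1"
    using assms by simp
  finally show ?thesis
    by (simp add: power_less_one_iff abs_square_less_1)
qed

lemma leading_term_in_closed_sector:
  fixes g :: "complex \<Rightarrow> complex"
  assumes "isCont g z0"
    and ev: "\<forall>\<^sub>F t in at_right 0. cmod ((of_real t * u) ^ m * g (z0 + of_real t * u)) * cos c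
                                      \<le> Re ((of_real t * u) ^ m * g (z0 + of_real t * u))"
  shows "cmod (u ^ m * g z0) * cos c \<le> Re (u ^ m * g z0)"
proof -
  let ?T = "{v. cmod v * cos c \<le> Re v}"
  have "((\<lambda>t. z0 + of_real t * u) \<longlongrightarrow> z0 + of_real 0 * u) (at_right 0)"
    by (intro tendsto_intros)
  then have "((\<lambda>t. g (z0 + of_real t * u)) \<longlongrightarrow> g z0) (at_right 0)"
    using isCont_tendsto_compose[OF assms(1)] by simp
  then have lim: "((\<lambda>t. u ^ m * g (z0 + of_real t * u)) \<longlongrightarrow> u ^ m * g z0) (at_right 0)"
    by (rule tendsto_mult_left)
  have "\<forall>\<^sub>F t in at_right 0. u ^ m * g (z0 + of_real t * u) \<in> ?T"
    using ev eventually_at_right_real[OF zero_less_one]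
  proof eventually_elim
    case (elim t)
    then have "(of_real t * u) ^ m * g (z0 + of_real t * u) / of_real (t ^ m) \<in> ?T"
      using closed_sector_scale[OF elim(1), of "t ^ m"] elim(2) by simp
    then show ?case
      using elim by (simp add: power_mult_distrib)
  qed
  from Lim_in_closed_set[OF closed_sector_le this trivial_limit_at_right_real lim]
  have "u ^ m * g z0 \<in> ?T" .
  then show ?thesis
    by simp
qed

lemma rotations_not_in_closed_sector:
  assumes "v \<noteq> 0" "c < \<sigma>" "0 \<le> c" "\<sigma> \<le> pi / 2"
  shows "\<not> (cmod v * cos c \<le> Re (v * cis \<sigma>) \<and> cmod v * cos c \<le> Re (v * cis (-\<sigma>)))"
proof
  assume "cmod v * cos c \<le> Re (v * cis \<sigma>) \<and> cmod v * cos c \<le> Re (v * cis (-\<sigma>))"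
  then have "2 * (cmod v * cos c) \<le> 2 * (Re v * cos \<sigma>)"
    by (simp add: cis.code)
  also have "\<dots> \<le> 2 * (cmod v * cos \<sigma>)"
    using complex_Re_le_cmod[of v] cos_ge_zero[of \<sigma>] assms by (simp add: mult_right_mono)
  finally have "cos c \<le> cos \<sigma>"
    using assms(1) by simp
  moreover have "cos \<sigma> < cos c"
    using assms by (intro cos_monotone_0_pi) auto
  ultimately show False
    by simp
qed

lemma inner_direction_in_closed_sector:
  fixes p g :: "complex \<Rightarrow> complex"
  assumes "isCont g z0" "0 < r" "z0 \<noteq> 0" and pg: "\<And>w. w \<in> ball z0 r \<Longrightarrow> p w = (w - z0) ^ m * g w"
    and cl: "\<And>w. cmod w < cmod z0 \<Longrightarrow> cmod (p w) * cos c \<le> Re (p w)" and "\<bar>\<theta>\<bar> < pi / 2"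
  shows "cmod ((-z0 * cis \<theta>) ^ m * g z0) * cos c \<le> Re ((-z0 * cis \<theta>) ^ m * g z0)"
proof (rule leading_term_in_closed_sector[OF \<open>isCont g z0\<close>])
  define e where "e = min (2 * cos \<theta>) (r / cmod z0)"
  have "0 < cos \<theta>"
    using \<open>\<bar>\<theta>\<bar> < pi / 2\<close> by (intro cos_gt_zero_pi) auto
  then have "0 < e"
    using \<open>0 < r\<close> \<open>z0 \<noteq> 0\<close> by (simp add: e_def)
  show "\<forall>\<^sub>F t in at_right 0. cmod ((of_real t * (-z0 * cis \<theta>)) ^ m * g (z0 + of_real t * (-z0 * cis \<theta>))) * cos c
      \<le> Re ((of_real t * (-z0 * cis \<theta>)) ^ m * g (z0 + of_real t * (-z0 * cis \<theta>)))"
    using eventually_at_right_real[OF \<open>0 < e\<close>]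
  proof eventually_elim
    case (elim t)
    define w where "w = z0 + of_real t * (-z0 * cis \<theta>)"
    have "dist z0 w = t * cmod z0"
      using elim by (simp add: w_def dist_norm norm_mult)
    also have "\<dots> < r"
      using elim \<open>z0 \<noteq> 0\<close> by (simp add: e_def field_simps)
    finally have "w \<in> ball z0 r"
      by simp
    have "cmod (1 - of_real t * cis \<theta>) < 1"
      using elim by (intro norm_one_minus_cis_less_one) (auto simp: e_def)
    moreover have "w = z0 * (1 - of_real t * cis \<theta>)"
      by (simp add: w_def algebra_simps)
    ultimately have "cmod w < cmod z0"
      using \<open>z0 \<noteq> 0\<close> by (simp add: norm_mult)
    then show ?case
      using cl[of w] pg[OF \<open>w \<in> ball z0 r\<close>] by (simp add: w_def)
  qed
qed

lemma closed_sector_boundary_nonzero: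
  fixes p :: "complex \<Rightarrow> complex"
  assumes hol: "p holomorphic_on ball 0 1" and p0: "p 0 \<noteq> 0" and z0: "z0 \<in> ball 0 1"
    and c: "0 < c" "c < pi / 2"
    and cl: "\<And>w. cmod w < cmod z0 \<Longrightarrow> cmod (p w) * cos c \<le> Re (p w)"
  shows "p z0 \<noteq> 0"
proof
  assume pz: "p z0 = 0"
  have "z0 \<noteq> 0"
    using pz p0 by auto
  have "\<not> p constant_on ball 0 1"
    using pz p0 z0 by (metis centre_in_ball constant_on_def zero_less_one)
  then obtain g r m where "0 < m" "0 < r" and g: "g holomorphic_on ball z0 r"
      and pg: "\<And>w. w \<in> ball z0 r \<Longrightarrow> p w = (w - z0) ^ m * g w"
      and gnz: "\<And>w. w \<in> ball z0 r \<Longrightarrow> g w \<noteq> 0"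
    using holomorphic_factor_zero_nonconstant[OF hol open_ball connected_ball z0 pz] by metis
  have "isCont g z0"
    using holomorphic_on_imp_continuous_on[OF g] \<open>0 < r\<close>
    by (simp add: continuous_on_eq_continuous_at)
  note inner = inner_direction_in_closed_sector[OF this \<open>0 < r\<close> \<open>z0 \<noteq> 0\<close> pg cl]
  \<comment> \<open>the inner half plane of directions at z0 is mapped onto an angle of opening m \<pi> > 2 c\<close>
  define \<sigma> where "\<sigma> = (c + pi / 2) / 2"
  define L0 where "L0 = (-z0) ^ m * g z0"
  have "L0 \<noteq> 0"
    using \<open>z0 \<noteq> 0\<close> gnz[of z0] \<open>0 < r\<close> by (simp add: L0_def)
  have rot: "(-z0 * cis (s / real m)) ^ m * g z0 = L0 * cis s" for s
  proof -
    have "(-z0 * cis (s / real m)) ^ m * g z0 = L0 * cis (real m * (s / real m))"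
      by (simp only: L0_def power_mult_distrib Complex.DeMoivre mult_ac)
    then show ?thesis
      using \<open>0 < m\<close> by simp
  qed
  have "pi * 2 \<le> pi * (2 * real m)"
    using \<open>0 < m\<close> by simp
  then have "c * 2 + pi < pi * (2 * real m)"
    using c by linarith
  then have "\<bar>\<sigma> / real m\<bar> < pi / 2"
    using c \<open>0 < m\<close> by (simp add: \<sigma>_def field_simps)
  then have "cmod L0 * cos c \<le> Re (L0 * cis \<sigma>) \<and> cmod L0 * cos c \<le> Re (L0 * cis (-\<sigma>))"
    using inner[of "\<sigma> / real m", unfolded rot] inner[of "- \<sigma> / real m", unfolded rot]
    by (simp only: norm_mult norm_cis abs_minus_cancel divide_minus_left mult_1_right)
  then show False
    using rotations_not_in_closed_sector[OF \<open>L0 \<noteq> 0\<close>, of c \<sigma>] c by (simp add: \<sigma>_def)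
qed

lemma sector_first_exit:
  fixes p :: "complex \<Rightarrow> complex"
  assumes hp: "p holomorphic_on ball 0 1" "p 0 = 1" and c: "0 < c" "c \<le> pi / 2"
    and nz: "c < pi / 2 \<or> (\<forall>z\<in>ball 0 1. p z \<noteq> 0)"
    and z1: "z1 \<in> ball 0 1" "p z1 \<notin> sector c"
  obtains z0 where "z0 \<in> ball 0 1" "z0 \<noteq> 0" "p z0 \<noteq> 0" "Re (p z0) = cmod (p z0) * cos c"
    "\<And>z. cmod z < cmod z0 \<Longrightarrow> p z \<in> sector c"
proof -
  have cont: "continuous_on (ball 0 1) p"
    using hp(1) by (rule holomorphic_on_imp_continuous_on)
  obtain z0 where z0: "z0 \<in> ball 0 1" "p z0 \<notin> sector c"
    and inside: "\<And>z. cmod z < cmod z0 \<Longrightarrow> p z \<in> sector c"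
    using first_exit_point[OF cont open_sector z1] by blast
  have "cos c < cos 0"
    using c by (intro cos_monotone_0_pi) auto
  then have "z0 \<noteq> 0"
    using z0(2) hp(2) by (auto simp: sector_def)
  have "p z0 \<in> {w. cmod w * cos c \<le> Re w}"
    using \<open>z0 \<noteq> 0\<close> inside
    by (intro radial_limit_in_closed[OF cont open_ball z0(1) _ closed_sector_le])
       (auto simp: sector_def less_imp_le)
  then have boundary: "Re (p z0) = cmod (p z0) * cos c"
    using z0(2) by (simp add: sector_def)
  have "p z0 \<noteq> 0"
  proof (cases "c < pi / 2")
    case True
    show ?thesis
      using inside by (intro closed_sector_boundary_nonzero[OF hp(1) _ z0(1) c(1) True])
        (auto simp: hp(2) sector_def less_imp_le)
  qed (use nz z0(1) in auto)
  then show ?thesis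
    using that z0(1) \<open>z0 \<noteq> 0\<close> boundary inside by blast
qed

lemma starlike_Un_convex:
  assumes "convex A" "convex B" "x \<in> A" "x \<in> B"
  shows "starlike (A \<union> B)"
  unfolding starlike_def
proof (intro bexI ballI)
  fix y
  assume "y \<in> A \<union> B"
  then show "closed_segment x y \<subseteq> A \<union> B"
    using closed_segment_subset[of x A y] closed_segment_subset[of x B y] assms by blast
qed (use assms in simp)

lemma starlike_ball_Un_ball:
  fixes z0 :: complex
  assumes "0 < \<epsilon>" "\<epsilon> < cmod z0"
  shows "starlike (ball 0 (cmod z0) \<union> ball z0 \<epsilon>)"
proof -
  define r where "r = cmod z0"
  define x0 where "x0 = of_real (1 - \<epsilon> / (2 * r)) * z0"
  have "0 < r" "\<epsilon> < r"
    using assms unfolding r_def by linarith+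
  then have "0 < 1 - \<epsilon> / (2 * r)"
    by (simp add: field_simps)
  then have "cmod x0 = (1 - \<epsilon> / (2 * r)) * r"
    by (simp only: x0_def norm_mult norm_of_real r_def abs_of_pos)
  also have "\<dots> = r - \<epsilon> / 2"
    using \<open>0 < r\<close> by (simp add: field_simps)
  finally have "cmod x0 = r - \<epsilon> / 2" .
  moreover have "z0 - x0 = of_real (\<epsilon> / (2 * r)) * z0"
    by (simp add: x0_def algebra_simps)
  then have "dist z0 x0 = \<epsilon> / (2 * r) * r"
    using assms by (simp only: dist_norm norm_mult norm_of_real r_def abs_of_pos) simp
  ultimately have "x0 \<in> ball 0 r" "x0 \<in> ball z0 \<epsilon>"
    using assms by (auto simp: r_def)
  from starlike_Un_convex[OF convex_ball convex_ball this]
  show ?thesis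
    unfolding r_def .
qed

lemma nonvanishing_starlike_neighbourhood:
  fixes p :: "complex \<Rightarrow> complex"
  assumes "continuous_on (ball 0 1) p" "z0 \<in> ball 0 1" "z0 \<noteq> 0" "p z0 \<noteq> 0"
    and inside: "\<And>z. cmod z < cmod z0 \<Longrightarrow> p z \<noteq> 0"
  obtains \<epsilon> where "0 < \<epsilon>" "\<epsilon> < cmod z0" "ball 0 (cmod z0) \<union> ball z0 \<epsilon> \<subseteq> ball 0 1"
    "starlike (ball 0 (cmod z0) \<union> ball z0 \<epsilon>)"
    "\<And>z. z \<in> ball 0 (cmod z0) \<union> ball z0 \<epsilon> \<Longrightarrow> p z \<noteq> 0"
proof -
  obtain \<epsilon>0 where "\<epsilon>0 > 0" and \<epsilon>0: "\<And>y. y \<in> ball 0 1 \<Longrightarrow> dist z0 y < \<epsilon>0 \<Longrightarrow> p y \<noteq> 0"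
    using continuous_on_avoid[OF assms(1,2,4)] by blast
  define \<epsilon> where "\<epsilon> = min \<epsilon>0 (min (1 - cmod z0) (cmod z0)) / 2"
  have "0 < cmod z0" "cmod z0 < 1"
    using assms(2,3) by auto
  then have \<epsilon>: "0 < \<epsilon>" "\<epsilon> < \<epsilon>0" "\<epsilon> < 1 - cmod z0" "\<epsilon> < cmod z0"
    using \<open>\<epsilon>0 > 0\<close> by (auto simp: \<epsilon>_def min_def simp del: zero_less_norm_iff)
  have sub: "ball z0 \<epsilon> \<subseteq> ball 0 1"
  proof
    fix y
    assume "y \<in> ball z0 \<epsilon>"
    then show "y \<in> ball 0 1"
      using \<epsilon> norm_triangle_sub[of y z0] by (simp add: dist_norm norm_minus_commute)
  qed
  show ?thesis
  proof (rule that[OF \<open>0 < \<epsilon>\<close> \<open>\<epsilon> < cmod z0\<close> _ starlike_ball_Un_ball[OF \<open>0 < \<epsilon>\<close> \<open>\<epsilon> < cmod z0\<close>]])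
    show "ball 0 (cmod z0) \<union> ball z0 \<epsilon> \<subseteq> ball 0 1"
      using sub assms(2) by auto
    show "p z \<noteq> 0" if "z \<in> ball 0 (cmod z0) \<union> ball z0 \<epsilon>" for z
      using that inside \<epsilon>0[of z] sub \<epsilon> by auto
  qed
qed

lemma holomorphic_log_vanishing_at_0:
  assumes "open S" "starlike S" "0 \<in> S" "p holomorphic_on S" "\<And>z. z \<in> S \<Longrightarrow> p z \<noteq> 0" "p 0 = 1"
  obtains L where "L holomorphic_on S" "\<And>z. z \<in> S \<Longrightarrow> p z = exp (L z)" "L 0 = 0"
proof -
  obtain g where "g holomorphic_on S" and g: "\<And>z. z \<in> S \<Longrightarrow> p z = exp (g z)"
    using simply_connected_eq_holomorphic_log[OF assms(1)] starlike_imp_simply_connected[OF assms(2)]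
      assms(4,5) by blast
  show ?thesis
  proof (rule that[of "\<lambda>z. g z - g 0"])
    show "(\<lambda>z. g z - g 0) holomorphic_on S"
      by (intro holomorphic_intros \<open>g holomorphic_on S\<close>)
    show "p z = exp (g z - g 0)" if "z \<in> S" for z
      using g[OF that] g[OF \<open>0 \<in> S\<close>] \<open>p 0 = 1\<close> by (simp add: exp_diff)
  qed simp
qed

lemma abs_less_on_connected:
  fixes g :: "'a::topological_space \<Rightarrow> real"
  assumes "connected U" "continuous_on U g" "x0 \<in> U" "\<bar>g x0\<bar> < c"
    and avoid: "\<And>x. x \<in> U \<Longrightarrow> \<bar>g x\<bar> \<noteq> c" and "x \<in> U"
  shows "\<bar>g x\<bar> < c"
proof (rule ccontr)
  assume "\<not> \<bar>g x\<bar> < c"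
  have "connected (g ` U)"
    using assms(2,1) by (rule connected_continuous_image)
  then have "c \<in> g ` U \<or> -c \<in> g ` U"
    using connected_iff_interval[of "g ` U"] \<open>\<not> \<bar>g x\<bar> < c\<close> assms(3,4,6)
    by (smt (verit, best) image_eqI)
  moreover have "0 < c"
    using assms(4) by linarith
  ultimately show False
    using avoid by (metis abs_minus_cancel abs_of_pos imageE)
qed

lemma sector_exit_log:
  fixes p :: "complex \<Rightarrow> complex" and z0 :: complex and \<epsilon> :: real
  defines "D \<equiv> ball 0 (cmod z0) \<union> ball z0 \<epsilon>"
  assumes hp: "p holomorphic_on D" "p 0 = 1" "\<And>z. z \<in> D \<Longrightarrow> p z \<noteq> 0" and "starlike D"
    and "z0 \<noteq> 0" "0 < \<epsilon>" "\<epsilon> < cmod z0" and c: "0 < c" "c < pi"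
    and boundary: "Re (p z0) = cmod (p z0) * cos c"
    and inside: "\<And>z. cmod z < cmod z0 \<Longrightarrow> p z \<in> sector c"
  obtains L s where "L holomorphic_on D" "L 0 = 0" "\<And>z. z \<in> D \<Longrightarrow> p z = exp (L z)"
    "\<And>z. cmod z < cmod z0 \<Longrightarrow> \<bar>Im (L z)\<bar> < c"
    "\<And>z. z \<in> ball z0 \<epsilon> \<Longrightarrow> cmod z \<le> cmod z0 \<Longrightarrow> \<bar>Im (L z)\<bar> \<le> c"
    "s = 1 \<or> s = -1" "Im (L z0) = s * c"
proof -
  have "open D" "0 \<in> D" "z0 \<in> D"
    using \<open>z0 \<noteq> 0\<close> \<open>0 < \<epsilon>\<close> by (auto simp: D_def)
  obtain L where L: "L holomorphic_on D" "\<And>z. z \<in> D \<Longrightarrow> p z = exp (L z)" "L 0 = 0"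
    using holomorphic_log_vanishing_at_0[OF \<open>open D\<close> \<open>starlike D\<close> \<open>0 \<in> D\<close> hp(1,3,2)] by blast
  have contL: "continuous_on D (\<lambda>z. Im (L z))"
    using holomorphic_on_imp_continuous_on[OF L(1)] by (intro continuous_intros)
  have polar: "Re (p z) = cmod (p z) * cos (Im (L z))" if "z \<in> D" for z
    using L(2)[OF that] by (simp add: Re_exp)
  have strict: "\<bar>Im (L z)\<bar> < c" if "cmod z < cmod z0" for z
  proof (rule abs_less_on_connected[of "ball 0 (cmod z0)" "\<lambda>z. Im (L z)" 0])
    show "continuous_on (ball 0 (cmod z0)) (\<lambda>z. Im (L z))"
      using contL by (rule continuous_on_subset) (auto simp: D_def)
    show "\<bar>Im (L w)\<bar> \<noteq> c" if "w \<in> ball 0 (cmod z0)" for w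
    proof
      assume "\<bar>Im (L w)\<bar> = c"
      then have "cos (Im (L w)) = cos c"
        by (metis abs_of_nonneg abs_of_nonpos cos_minus linear)
      then show False
        using inside[of w] polar[of w] that by (simp add: D_def sector_def)
    qed
  qed (use that c \<open>L 0 = 0\<close> \<open>z0 \<noteq> 0\<close> in simp_all)
  have weak: "\<bar>Im (L z)\<bar> \<le> c" if z: "z \<in> ball z0 \<epsilon>" "cmod z \<le> cmod z0" for z
  proof -
    have "cmod (z0 - z) < \<epsilon>"
      using z by (simp add: dist_norm)
    then have "0 < cmod z"
      using \<open>\<epsilon> < cmod z0\<close> norm_triangle_sub[of z0 z] by linarith
    have "Im (L z) \<in> {-c..c}"
    proof (rule radial_limit_in_closed[OF contL \<open>open D\<close> _ \<open>0 < cmod z\<close> closed_atLeastAtMost])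
      show "z \<in> D"
        using z by (simp add: D_def)
      show "Im (L w) \<in> {-c..c}" if "cmod w < cmod z" for w
        using strict[of w] that z(2) by (simp add: abs_less_iff)
    qed
    then show ?thesis
      by auto
  qed
  have "cos \<bar>Im (L z0)\<bar> = cos c"
    using boundary polar[OF \<open>z0 \<in> D\<close>] hp(3)[OF \<open>z0 \<in> D\<close>] by simp
  moreover have "\<bar>Im (L z0)\<bar> \<le> c"
    using weak[of z0] \<open>0 < \<epsilon>\<close> by simp
  ultimately have "\<bar>Im (L z0)\<bar> = c"
    using cos_inj_pi[of "\<bar>Im (L z0)\<bar>" c] c by auto
  then have "sgn (Im (L z0)) = 1 \<or> sgn (Im (L z0)) = -1" "Im (L z0) = sgn (Im (L z0)) * c"
    using c by (auto simp: sgn_if abs_if split: if_splits)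
  then show ?thesis
    using that[OF L(1) L(3) L(2) strict weak] by blast
qed

section \<open>Nunokawa's lemma\<close>

lemma exp_minus_one_factor:
  obtains E :: "complex \<Rightarrow> complex"
  where "E holomorphic_on UNIV" "\<And>u. exp u - 1 = u * E u" "E 0 = 1"
proof
  let ?E = "\<lambda>u::complex. if u = 0 then deriv exp 0 else (exp u - exp 0) / (u - 0)"
  show "?E holomorphic_on UNIV"
    by (rule pole_lemma) (auto intro: holomorphic_intros)
  show "exp u - 1 = u * ?E u" for u :: complex
    by simp
  show "?E 0 = 1"
    using DERIV_imp_deriv[OF DERIV_exp[of "0::complex"]] by simp
qed

lemma log_of_one_plus_power_factor:
  fixes L q :: "complex \<Rightarrow> complex"
  assumes L: "L holomorphic_on S" and "open S" "0 \<in> S" "L 0 = 0" and q: "q holomorphic_on S"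
    and Lq: "\<And>z. z \<in> S \<Longrightarrow> exp (L z) - 1 = z ^ n * q z"
  obtains h where "h holomorphic_on S" "\<And>z. z \<in> S \<Longrightarrow> L z = z ^ n * h z"
proof
  obtain E where E: "E holomorphic_on UNIV" "\<And>u. exp u - 1 = u * E u" "E 0 = 1"
    using exp_minus_one_factor by blast
  define h where "h z = (if z = 0 then q 0 else L z / z ^ n)" for z
  show "L z = z ^ n * h z" if "z \<in> S" for z
    using Lq[OF \<open>0 \<in> S\<close>] \<open>L 0 = 0\<close> by (cases "z = 0") (auto simp: h_def)
  show "h holomorphic_on S"
  proof (rule no_isolated_singularity'[where K="{0}"])
    have "(\<lambda>z. L z / z ^ n) holomorphic_on S - {0}"
      by (intro holomorphic_intros holomorphic_on_subset[OF L]) auto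
    then show "h holomorphic_on S - {0}"
      by (rule holomorphic_transform) (simp add: h_def)
    have "isCont L 0" "isCont q 0"
      using L q \<open>open S\<close> \<open>0 \<in> S\<close> holomorphic_on_imp_continuous_on continuous_on_eq_continuous_at
      by blast+
    moreover have "isCont E (L 0)"
      using holomorphic_on_imp_continuous_on[OF E(1)] by (simp add: continuous_on_eq_continuous_at)
    ultimately have "((\<lambda>z. E (L z)) \<longlongrightarrow> E (L 0)) (at 0)"
      using isCont_tendsto_compose by (auto simp: isCont_def)
    then have EL: "((\<lambda>z. E (L z)) \<longlongrightarrow> 1) (at 0)"
      using \<open>L 0 = 0\<close> E(3) by simp
    \<comment> \<open>near 0, the quotient equals q z / E (L z), whose limit is q 0\<close>
    have "\<forall>\<^sub>F z in at 0. E (L z) \<noteq> 0"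
      using tendsto_imp_eventually_ne[OF EL] by simp
    then have "\<forall>\<^sub>F z in at 0. q z / E (L z) = h z"
      using eventually_at_in_open[OF \<open>open S\<close> \<open>0 \<in> S\<close>]
    proof eventually_elim
      case (elim z)
      then show ?case
        using Lq[of z] E(2)[of "L z"] by (simp add: h_def frac_eq_eq mult.commute)
    qed
    moreover have "((\<lambda>z. q z / E (L z)) \<longlongrightarrow> q 0) (at 0)"
      using tendsto_divide[OF \<open>isCont q 0\<close>[unfolded isCont_def] EL] by simp
    ultimately have "(h \<longlongrightarrow> h 0) (at 0)"
      by (simp add: h_def Lim_transform_eventually)
    then show "(h \<longlongrightarrow> h z) (at z within S)" if "z \<in> {0}" for z
      using that by (auto intro: tendsto_within_subset)
  qed (use \<open>open S\<close> in auto)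
qed

lemma cayley_of_exp_power_factor:
  fixes u h :: "complex \<Rightarrow> complex"
  assumes "u holomorphic_on S" "h holomorphic_on S"
    and nz: "\<And>z. z \<in> S \<Longrightarrow> exp (u z) + 1 \<noteq> 0"
    and u: "\<And>z. z \<in> S \<Longrightarrow> u z = z ^ n * h z"
  obtains v where "v holomorphic_on S"
    "\<And>z. z \<in> S \<Longrightarrow> (exp (u z) - 1) / (exp (u z) + 1) = z ^ n * v z"
proof -
  obtain E where E: "E holomorphic_on UNIV" "\<And>u. exp u - 1 = u * E u"
    using exp_minus_one_factor by blast
  have "(\<lambda>z. E (u z)) holomorphic_on S"
    using holomorphic_on_compose[OF assms(1) holomorphic_on_subset[OF E(1)]] by (simp add: o_def)
  then have "(\<lambda>z. h z * E (u z) / (exp (u z) + 1)) holomorphic_on S"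
    using assms(1,2) nz by (intro holomorphic_intros) auto
  then show ?thesis
    by (rule that) (simp add: E(2) u)
qed

lemma cayley_norm_square_diff: "(cmod (w + 1))\<^sup>2 - (cmod (w - 1))\<^sup>2 = 4 * Re w"
  by (simp only: cmod_power2) (simp add: power2_eq_square algebra_simps)

lemma cayley_norm_le_one:
  assumes "0 \<le> Re w"
  shows "w + 1 \<noteq> 0" "cmod ((w - 1) / (w + 1)) \<le> 1"
proof -
  show nz: "w + 1 \<noteq> 0"
    using assms by (auto simp: complex_eq_iff)
  have "(cmod (w - 1))\<^sup>2 \<le> (cmod (w + 1))\<^sup>2"
    using cayley_norm_square_diff[of w] assms by linarith
  then show "cmod ((w - 1) / (w + 1)) \<le> 1"
    using nz by (simp add: power2_le_iff_abs_le norm_divide divide_le_eq)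
qed

lemma cayley_norm_less_one:
  assumes "0 < Re w"
  shows "cmod ((w - 1) / (w + 1)) < 1"
proof -
  have "(cmod (w - 1))\<^sup>2 < (cmod (w + 1))\<^sup>2"
    using cayley_norm_square_diff[of w] assms by linarith
  then have "cmod (w - 1) < cmod (w + 1)"
    by (rule power2_less_imp_less) simp
  then show ?thesis
    using cayley_norm_le_one(1)[of w] assms by (simp add: norm_divide divide_less_eq)
qed

lemma cayley_norm_eq_one:
  assumes "Re w = 0"
  shows "cmod ((w - 1) / (w + 1)) = 1"
proof -
  have "(cmod (w - 1))\<^sup>2 = (cmod (w + 1))\<^sup>2"
    using cayley_norm_square_diff[of w] assms by simp
  then have "cmod (w - 1) = cmod (w + 1)"
    by simp
  then show ?thesis
    using cayley_norm_le_one(1)[of w] assms by (simp add: norm_divide)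
qed

lemma Re_exp_pos:
  assumes "\<bar>Im u\<bar> < pi / 2"
  shows "0 < Re (exp u)"
  using assms cos_gt_zero_pi[of "Im u"] by (simp add: Re_exp abs_less_iff)

lemma Re_exp_nonneg:
  assumes "\<bar>Im u\<bar> \<le> pi / 2"
  shows "0 \<le> Re (exp u)"
  using assms cos_ge_zero[of "Im u"] by (simp add: Re_exp abs_le_iff)

lemma has_field_derivative_cayley:
  assumes "(P has_field_derivative P') (at z)" "P z + 1 \<noteq> 0"
  shows "((\<lambda>z. (P z - 1) / (P z + 1)) has_field_derivative 2 * P' / (P z + 1)\<^sup>2) (at z)"
proof -
  have "((\<lambda>z. (P z - 1) / (P z + 1)) has_field_derivative
      ((P' - 0) * (P z + 1) - (P z - 1) * (P' + 0)) / ((P z + 1) * (P z + 1))) (at z)"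
    using assms by (intro DERIV_divide DERIV_diff DERIV_add DERIV_const)
  moreover have "(P' - 0) * (P z + 1) - (P z - 1) * (P' + 0) = 2 * P'"
    by (simp add: algebra_simps)
  ultimately show ?thesis
    by (simp add: power2_eq_square)
qed

lemma log_derivative_from_cayley_quotient:
  fixes s a \<delta> :: real and z0 L' :: complex
  defines "P0 \<equiv> \<i> * of_real (s * a)"
  assumes s: "s = 1 \<or> s = -1" and "0 < a" "0 < \<delta>"
    and \<Lambda>: "\<Lambda> = z0 * (2 * (P0 * (L' / of_real \<delta>)) / (P0 + 1)\<^sup>2) / ((P0 - 1) / (P0 + 1))"
    and "Im \<Lambda> = 0"
  shows "z0 * L' = \<i> * of_real (s * (Re \<Lambda> * (a + 1 / a) / 2) * \<delta>)"
proof -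
  have nz: "P0 + 1 \<noteq> 0" "P0 - 1 \<noteq> 0" "P0 \<noteq> 0"
    using s \<open>0 < a\<close> by (auto simp: P0_def complex_eq_iff)
  have "\<Lambda> * ((P0 - 1) / (P0 + 1)) = z0 * (2 * (P0 * (L' / of_real \<delta>)) / (P0 + 1)\<^sup>2)"
    using nz by (simp add: \<Lambda>)
  then have "\<Lambda> * ((P0 - 1) / (P0 + 1)) * ((P0 + 1)\<^sup>2 * of_real \<delta>)
      = z0 * (2 * (P0 * (L' / of_real \<delta>)) / (P0 + 1)\<^sup>2) * ((P0 + 1)\<^sup>2 * of_real \<delta>)"
    by simp
  moreover have "\<Lambda> * ((P0 - 1) / (P0 + 1)) * ((P0 + 1)\<^sup>2 * of_real \<delta>) = \<Lambda> * (P0 - 1) * (P0 + 1) * of_real \<delta>"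
    using nz by (simp add: power2_eq_square)
  moreover have "z0 * (2 * (P0 * (L' / of_real \<delta>)) / (P0 + 1)\<^sup>2) * ((P0 + 1)\<^sup>2 * of_real \<delta>) = 2 * P0 * (z0 * L')"
    using nz \<open>0 < \<delta>\<close> by (simp add: power2_eq_square)
  ultimately have "\<Lambda> * (P0 - 1) * (P0 + 1) * of_real \<delta> = 2 * P0 * (z0 * L')"
    by simp
  moreover have "(P0 - 1) * (P0 + 1) = - of_real (a\<^sup>2 + 1)"
    using s by (auto simp: P0_def algebra_simps power2_eq_square)
  moreover have "\<Lambda> = of_real (Re \<Lambda>)"
    using \<open>Im \<Lambda> = 0\<close> by (simp add: complex_eq_iff)
  ultimately have X: "2 * P0 * (z0 * L') = - of_real (a\<^sup>2 + 1) * of_real (Re \<Lambda>) * of_real \<delta>"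
    by (metis mult.commute mult.left_commute mult_minus_left)
  have "Re (z0 * L') = 0" "Im (z0 * L') = s * (Re \<Lambda> * (a + 1 / a) / 2) * \<delta>"
    using s \<open>0 < a\<close> arg_cong[OF X, of Re] arg_cong[OF X, of Im]
    by (auto simp: P0_def field_simps power2_eq_square)
  then show ?thesis
    by (simp add: complex_eq_iff)
qed

lemma eventually_mult_cis_in_ball:
  assumes "0 < \<epsilon>"
  shows "\<forall>\<^sub>F s in at 0. z0 * cis s \<in> ball z0 \<epsilon>"
proof -
  have "((\<lambda>s. z0 * cis s) \<longlongrightarrow> z0 * cis 0) (at 0)"
    by (intro tendsto_intros continuous_on_tendsto_compose[OF continuous_on_cis] tendsto_ident_at)
  then show ?thesis
    using assms by (intro topological_tendstoD) auto
qed

lemma jack_for_cayley_of_exp: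
  fixes u h :: "complex \<Rightarrow> complex" and z0 :: complex and \<epsilon> :: real
  defines "D \<equiv> ball 0 (cmod z0) \<union> ball z0 \<epsilon>" and "P \<equiv> exp (u z0)"
  defines "\<Lambda> \<equiv> z0 * (2 * (P * deriv u z0) / (P + 1)\<^sup>2) / ((P - 1) / (P + 1))"
  assumes u: "u holomorphic_on D" and "z0 \<noteq> 0" "0 < \<epsilon>"
    and h: "h holomorphic_on ball 0 (cmod z0)" "\<And>z. cmod z < cmod z0 \<Longrightarrow> u z = z ^ n * h z"
    and strict: "\<And>z. cmod z < cmod z0 \<Longrightarrow> \<bar>Im (u z)\<bar> < pi / 2"
    and weak: "\<And>z. z \<in> ball z0 \<epsilon> \<Longrightarrow> cmod z \<le> cmod z0 \<Longrightarrow> \<bar>Im (u z)\<bar> \<le> pi / 2"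
    and "Re P = 0"
  shows "Im \<Lambda> = 0" "real n \<le> Re \<Lambda>"
proof -
  define r where "r = cmod z0"
  define W where "W z = (exp (u z) - 1) / (exp (u z) + 1)" for z
  have "0 < r" "open D" "z0 \<in> D" "ball 0 r \<subseteq> D"
    using \<open>z0 \<noteq> 0\<close> \<open>0 < \<epsilon>\<close> by (auto simp: r_def D_def)
  have ReP: "0 < Re (exp (u z))" if "z \<in> ball 0 r" for z
    using strict[of z] that by (intro Re_exp_pos) (simp add: r_def)
  obtain v where "v holomorphic_on ball 0 r" and v: "\<And>z. z \<in> ball 0 r \<Longrightarrow> W z = z ^ n * v z"
  proof (rule cayley_of_exp_power_factor[of u "ball 0 r" h n])
    show "u holomorphic_on ball 0 r"
      using holomorphic_on_subset[OF u \<open>ball 0 r \<subseteq> D\<close>] .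
    show "exp (u z) + 1 \<noteq> 0" if "z \<in> ball 0 r" for z
      using cayley_norm_le_one(1)[OF less_imp_le[OF ReP[OF that]]] .
  qed (use h in \<open>auto simp: W_def r_def\<close>)
  have Wv: "W z = z ^ n * v z \<and> cmod (W z) \<le> 1" if "z \<in> ball 0 r" for z
    using v[OF that] cayley_norm_less_one[OF ReP[OF that]] by (simp add: W_def)
  have W0: "cmod (W z0) = 1" and "P + 1 \<noteq> 0"
    using cayley_norm_eq_one[of P] cayley_norm_le_one(1)[of P] \<open>Re P = 0\<close> by (auto simp: W_def P_def)
  have "(u has_field_derivative deriv u z0) (at z0)"
    using holomorphic_derivI[OF u \<open>open D\<close> \<open>z0 \<in> D\<close>] .
  from DERIV_chain2[OF DERIV_exp this]
  have "((\<lambda>z. exp (u z)) has_field_derivative P * deriv u z0) (at z0)"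
    by (simp add: P_def)
  from has_field_derivative_cayley[OF this] \<open>P + 1 \<noteq> 0\<close>
  have dW: "(W has_field_derivative 2 * (P * deriv u z0) / (P + 1)\<^sup>2) (at z0)"
    by (simp add: W_def[abs_def] P_def)
  have "\<forall>\<^sub>F t in at 0. cmod (W (z0 * cis t)) \<le> 1"
    using eventually_mult_cis_in_ball[OF \<open>0 < \<epsilon>\<close>, of z0]
  proof eventually_elim
    case (elim t)
    then show ?case
      using cayley_norm_le_one(2)[OF Re_exp_nonneg[OF weak]] by (simp add: W_def norm_mult)
  qed
  from jack_lemma[OF \<open>0 < r\<close> r_def[symmetric] \<open>v holomorphic_on ball 0 r\<close> Wv dW W0 this]
  show "Im \<Lambda> = 0" "real n \<le> Re \<Lambda>"
    by (simp_all add: \<Lambda>_def W_def P_def)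
qed

lemma nunokawa_log_derivative:
  fixes L q :: "complex \<Rightarrow> complex" and z0 :: complex and \<epsilon> \<delta> :: real
  defines "D \<equiv> ball 0 (cmod z0) \<union> ball z0 \<epsilon>" and "a \<equiv> exp (Re (L z0) / \<delta>)"
  assumes L: "L holomorphic_on D" "L 0 = 0" and "z0 \<noteq> 0" "0 < \<epsilon>" "0 < \<delta>"
    and q: "q holomorphic_on ball 0 (cmod z0)" "\<And>z. cmod z < cmod z0 \<Longrightarrow> exp (L z) - 1 = z ^ n * q z"
    and strict: "\<And>z. cmod z < cmod z0 \<Longrightarrow> \<bar>Im (L z)\<bar> < pi * \<delta> / 2"
    and weak: "\<And>z. z \<in> ball z0 \<epsilon> \<Longrightarrow> cmod z \<le> cmod z0 \<Longrightarrow> \<bar>Im (L z)\<bar> \<le> pi * \<delta> / 2"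
    and s: "s = 1 \<or> s = -1" "Im (L z0) = s * (pi * \<delta> / 2)"
  obtains k where "real n * (a + 1 / a) / 2 \<le> k" "z0 * deriv L z0 = \<i> * of_real (s * k * \<delta>)"
proof -
  have "open D" "z0 \<in> D" "0 \<in> D" "ball 0 (cmod z0) \<subseteq> D"
    using \<open>z0 \<noteq> 0\<close> \<open>0 < \<epsilon>\<close> by (auto simp: D_def)
  obtain h where "h holomorphic_on ball 0 (cmod z0)"
    and h: "\<And>z. z \<in> ball 0 (cmod z0) \<Longrightarrow> L z = z ^ n * h z"
    using log_of_one_plus_power_factor[OF holomorphic_on_subset[OF L(1)] open_ball _ L(2) q(1)] q(2)
      \<open>ball 0 (cmod z0) \<subseteq> D\<close> \<open>z0 \<noteq> 0\<close> by auto
  define P where "P = exp (L z0 / of_real \<delta>)"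
  have "P = of_real a * cis (Im (L z0) / \<delta>)"
    using exp_eq_polar[of "L z0 / of_real \<delta>"] by (simp add: P_def a_def)
  then have P: "P = \<i> * of_real (s * a)"
    using s \<open>0 < \<delta>\<close> by auto
  have "(\<lambda>z. L z / of_real \<delta>) holomorphic_on D" "(\<lambda>z. h z / of_real \<delta>) holomorphic_on ball 0 (cmod z0)"
    using L(1) \<open>h holomorphic_on _\<close> by (auto intro!: holomorphic_intros)
  moreover have "L z / of_real \<delta> = z ^ n * (h z / of_real \<delta>)" if "cmod z < cmod z0" for z
    using h[of z] that by simp
  moreover have Im: "\<bar>Im (L z / of_real \<delta>)\<bar> = \<bar>Im (L z)\<bar> / \<delta>" for z
    using \<open>0 < \<delta>\<close> by simp
  then have "\<bar>Im (L z / of_real \<delta>)\<bar> < pi / 2" if "cmod z < cmod z0" for z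
    using strict[OF that] \<open>0 < \<delta>\<close> by (simp add: divide_less_eq)
  moreover have "\<bar>Im (L z / of_real \<delta>)\<bar> \<le> pi / 2" if "z \<in> ball z0 \<epsilon>" "cmod z \<le> cmod z0" for z
    using weak[OF that] Im \<open>0 < \<delta>\<close> by (simp add: divide_le_eq)
  moreover have "Re (exp (L z0 / of_real \<delta>)) = 0"
    using P by (simp add: P_def)
  ultimately have "Im \<Lambda> = 0 \<and> real n \<le> Re \<Lambda>"
    if "\<Lambda> = z0 * (2 * (P * deriv (\<lambda>z. L z / of_real \<delta>) z0) / (P + 1)\<^sup>2) / ((P - 1) / (P + 1))" for \<Lambda>
    using jack_for_cayley_of_exp[of "\<lambda>z. L z / of_real \<delta>" z0 \<epsilon> "\<lambda>z. h z / of_real \<delta>" n] that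
      \<open>z0 \<noteq> 0\<close> \<open>0 < \<epsilon>\<close> unfolding D_def P_def by blast
  moreover have "deriv (\<lambda>z. L z / of_real \<delta>) z0 = deriv L z0 / of_real \<delta>"
    using holomorphic_on_imp_differentiable_at[OF L(1) \<open>open D\<close> \<open>z0 \<in> D\<close>] by (rule deriv_cdivide_right)
  ultimately have J: "Im \<Lambda> = 0" "real n \<le> Re \<Lambda>"
    if "\<Lambda> = z0 * (2 * (P * (deriv L z0 / of_real \<delta>)) / (P + 1)\<^sup>2) / ((P - 1) / (P + 1))" for \<Lambda>
    using that by auto
  define \<Lambda> where "\<Lambda> = z0 * (2 * (P * (deriv L z0 / of_real \<delta>)) / (P + 1)\<^sup>2) / ((P - 1) / (P + 1))"
  have "z0 * deriv L z0 = \<i> * of_real (s * (Re \<Lambda> * (a + 1 / a) / 2) * \<delta>)"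
    using J(1)[OF \<Lambda>_def] \<Lambda>_def by (intro log_derivative_from_cayley_quotient[OF s(1) _ \<open>0 < \<delta>\<close>]) (simp_all add: a_def P)
  moreover have "real n * (a + 1 / a) / 2 \<le> Re \<Lambda> * (a + 1 / a) / 2"
    using J(2)[OF \<Lambda>_def] by (intro divide_right_mono mult_right_mono) (auto simp: a_def)
  ultimately show ?thesis
    using that by blast
qed

lemma nunokawa:
  fixes p q :: "complex \<Rightarrow> complex" and \<delta> :: real
  assumes hp: "p holomorphic_on ball 0 1" and hq: "q holomorphic_on ball 0 1"
    and pq: "\<And>z. z \<in> ball 0 1 \<Longrightarrow> p z = 1 + z ^ n * q z" and "n \<ge> 1"
    and \<delta>: "0 < \<delta>" "\<delta> \<le> 1" and nz: "\<delta> < 1 \<or> (\<forall>z\<in>ball 0 1. p z \<noteq> 0)"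
    and z1: "z1 \<in> ball 0 1" "p z1 \<notin> sector (pi * \<delta> / 2)"
  obtains z0 a s k where "z0 \<in> ball 0 1" "0 < a" "s = 1 \<or> s = -1" "real n * (a + 1 / a) / 2 \<le> k"
    "p z0 = of_real (a powr \<delta>) * cis (s * (pi * \<delta> / 2))"
    "z0 * deriv p z0 = p z0 * (\<i> * of_real (s * k * \<delta>))"
proof -
  define c where "c = pi * \<delta> / 2"
  have c: "0 < c" "c \<le> pi / 2" "c < pi / 2 \<or> (\<forall>z\<in>ball 0 1. p z \<noteq> 0)"
    using \<delta> nz by (auto simp: c_def)
  have "p 0 = 1"
    using pq[of 0] \<open>n \<ge> 1\<close> by simp
  obtain z0 where z0: "z0 \<in> ball 0 1" "z0 \<noteq> 0" "p z0 \<noteq> 0" "Re (p z0) = cmod (p z0) * cos c"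
    and inside: "\<And>z. cmod z < cmod z0 \<Longrightarrow> p z \<in> sector c"
    using sector_first_exit[OF hp \<open>p 0 = 1\<close> c z1[folded c_def]] by blast
  obtain \<epsilon> where \<epsilon>: "0 < \<epsilon>" "\<epsilon> < cmod z0" and D: "ball 0 (cmod z0) \<union> ball z0 \<epsilon> \<subseteq> ball 0 1"
    "starlike (ball 0 (cmod z0) \<union> ball z0 \<epsilon>)" "\<And>z. z \<in> ball 0 (cmod z0) \<union> ball z0 \<epsilon> \<Longrightarrow> p z \<noteq> 0"
    using nonvanishing_starlike_neighbourhood[OF holomorphic_on_imp_continuous_on[OF hp] z0(1-3)]
      inside sector_nonzero by blast
  have "c < pi"
    using c(2) pi_gt_zero by linarith
  obtain L s where L: "L holomorphic_on ball 0 (cmod z0) \<union> ball z0 \<epsilon>" "L 0 = 0"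
      "\<And>z. z \<in> ball 0 (cmod z0) \<union> ball z0 \<epsilon> \<Longrightarrow> p z = exp (L z)"
    and strict: "\<And>z. cmod z < cmod z0 \<Longrightarrow> \<bar>Im (L z)\<bar> < c"
    and weak: "\<And>z. z \<in> ball z0 \<epsilon> \<Longrightarrow> cmod z \<le> cmod z0 \<Longrightarrow> \<bar>Im (L z)\<bar> \<le> c"
    and s: "s = 1 \<or> s = -1" "Im (L z0) = s * c"
    using sector_exit_log[OF holomorphic_on_subset[OF hp D(1)] \<open>p 0 = 1\<close> D(3,2) z0(2) \<epsilon> c(1) \<open>c < pi\<close> z0(4) inside]
    by blast
  have Lq: "exp (L z) - 1 = z ^ n * q z" if "cmod z < cmod z0" for z
    using L(3)[of z] pq[of z] that D(1) by auto
  obtain k where k: "real n * (exp (Re (L z0) / \<delta>) + 1 / exp (Re (L z0) / \<delta>)) / 2 \<le> k"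
    and Lk: "z0 * deriv L z0 = \<i> * of_real (s * k * \<delta>)"
    using nunokawa_log_derivative[OF L(1,2) z0(2) \<epsilon>(1) \<delta>(1) holomorphic_on_subset[OF hq] Lq
        strict[unfolded c_def] weak[unfolded c_def] s[unfolded c_def]] D(1) by blast
  have z0D: "z0 \<in> ball 0 (cmod z0) \<union> ball z0 \<epsilon>"
    using \<epsilon> by simp
  then have "p z0 = of_real (exp (Re (L z0) / \<delta>) powr \<delta>) * cis (s * c)"
    using L(3) exp_eq_polar[of "L z0"] s \<delta>(1) by (simp add: powr_def)
  moreover have "deriv p z0 = p z0 * deriv L z0"
  proof (rule DERIV_imp_deriv, rule has_field_derivative_transform_within_open[where S = "ball 0 (cmod z0) \<union> ball z0 \<epsilon>"])
    show "((\<lambda>z. exp (L z)) has_field_derivative p z0 * deriv L z0) (at z0)"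
      using holomorphic_derivI[OF L(1) _ z0D] L(3)[OF z0D]
      by (auto intro!: derivative_eq_intros)
  qed (use L(3) z0D in auto)
  ultimately show ?thesis
    using that[OF z0(1) exp_gt_zero s(1) k] Lk by (simp add: c_def mult.left_commute)
qed

section \<open>Argument estimates at the exit point\<close>

lemma cos_le_cos_outside:
  assumes "0 \<le> c" "c \<le> pi" "c \<le> x" "x \<le> 2 * pi - c"
  shows "cos x \<le> cos c"
proof (cases "x \<le> pi")
  case True
  then show ?thesis using cos_monotone_0_pi_le[of c x] assms by auto
next
  case False
  have "cos x = cos (2 * pi - x)" by (simp add: cos_diff)
  also have "\<dots> \<le> cos c" using cos_monotone_0_pi_le[of c "2 * pi - x"] assms False by auto
  finally show ?thesis .
qed

lemma two_le_add_inverse: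
  fixes a :: real
  assumes "0 < a"
  shows "2 \<le> a + 1 / a"
proof -
  have "2 * a \<le> a * a + 1"
    using zero_le_power2[of "a - 1"] by (simp add: power2_eq_square algebra_simps)
  then show ?thesis
    using assms by (simp add: field_simps)
qed

lemma Re_eq_norm_cos_one_plus_i:
  assumes s: "s = 1 \<or> s = -1" and "0 < A"
  shows "Re (of_real A * cis (s * c) * (1 + \<i> * of_real (s * t)))
       = cmod (of_real A * cis (s * c) * (1 + \<i> * of_real (s * t))) * cos (c + arctan t)"
proof -
  have "cmod (1 + \<i> * of_real (s * t)) = sqrt (1 + t\<^sup>2)"
    using s by (auto simp: cmod_def)
  then have "cmod (of_real A * cis (s * c) * (1 + \<i> * of_real (s * t))) = A * sqrt (1 + t\<^sup>2)"
    using \<open>0 < A\<close> by (simp add: norm_mult)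
  moreover have "Re (of_real A * cis (s * c) * (1 + \<i> * of_real (s * t))) = A * (cos c - t * sin c)"
    using s by (auto simp: algebra_simps)
  moreover have "cos (c + arctan t) = (cos c - t * sin c) / sqrt (1 + t\<^sup>2)"
    by (simp add: cos_add cos_arctan sin_arctan diff_divide_distrib)
  moreover have "0 < sqrt (1 + t\<^sup>2)"
    by (simp add: add_pos_nonneg)
  ultimately show ?thesis
    by simp
qed

lemma sector_from_p_plus_z_deriv:
  fixes p q :: "complex \<Rightarrow> complex" and \<delta> :: real
  assumes hp: "p holomorphic_on ball 0 1" and hq: "q holomorphic_on ball 0 1"
    and pq: "\<And>z. z \<in> ball 0 1 \<Longrightarrow> p z = 1 + z ^ n * q z" and "n \<ge> 1" and \<delta>: "0 < \<delta>" "\<delta> < 1"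
    and hyp: "\<And>z. z \<in> ball 0 1 \<Longrightarrow>
      p z + z * deriv p z \<in> sector (pi / 2 * (\<delta> + 2 / pi * arctan (real n * \<delta>)))"
    and "z \<in> ball 0 1"
  shows "p z \<in> sector (pi / 2 * \<delta>)"
proof (rule ccontr)
  assume "p z \<notin> sector (pi / 2 * \<delta>)"
  then have "p z \<notin> sector (pi * \<delta> / 2)"
    by (simp add: field_simps)
  then obtain z0 a s k where z0: "z0 \<in> ball 0 1" and "0 < a" and s: "s = 1 \<or> s = -1"
    and k: "real n * (a + 1 / a) / 2 \<le> k"
    and pz0: "p z0 = of_real (a powr \<delta>) * cis (s * (pi * \<delta> / 2))"
    and dz0: "z0 * deriv p z0 = p z0 * (\<i> * of_real (s * k * \<delta>))"
    using nunokawa[OF hp hq pq \<open>n \<ge> 1\<close> \<delta>(1) less_imp_le[OF \<delta>(2)] disjI1[OF \<delta>(2)] assms(8)]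
    by blast
  define C where "C = pi / 2 * (\<delta> + 2 / pi * arctan (real n * \<delta>))"
  define w where "w = p z0 + z0 * deriv p z0"
  \<comment> \<open>at the exit point p + z p' = p (1 + i s k \<delta>), whose argument is at least \<pi>\<delta>/2 + arctan (n \<delta>)\<close>
  have w: "w = of_real (a powr \<delta>) * cis (s * (pi * \<delta> / 2)) * (1 + \<i> * of_real (s * (k * \<delta>)))"
    unfolding w_def dz0 pz0 by (simp add: algebra_simps)
  have "0 < a powr \<delta>"
    using \<open>0 < a\<close> by simp
  then have Re_w: "Re w = cmod w * cos (pi * \<delta> / 2 + arctan (k * \<delta>))"
    unfolding w by (rule Re_eq_norm_cos_one_plus_i[OF s])
  have "real n \<le> k"
    using k mult_left_mono[OF two_le_add_inverse[OF \<open>0 < a\<close>], of "real n"] by simp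
  then have "arctan (real n * \<delta>) \<le> arctan (k * \<delta>)"
    using \<delta> by (intro arctan_monotone' mult_right_mono) auto
  moreover have "C = pi * \<delta> / 2 + arctan (real n * \<delta>)"
    by (simp add: C_def field_simps)
  moreover have "pi * \<delta> / 2 < pi / 2" "0 < pi * \<delta> / 2" "0 < arctan (real n * \<delta>)"
    using \<delta> \<open>n \<ge> 1\<close> by auto
  moreover have "arctan (k * \<delta>) < pi / 2" "arctan (real n * \<delta>) < pi / 2"
    by (rule arctan_ubound)+
  ultimately have cos_le: "cos (pi * \<delta> / 2 + arctan (k * \<delta>)) \<le> cos C"
    by (intro cos_le_cos_outside; linarith)
  have "w \<notin> sector C"
    using mult_left_mono[OF cos_le norm_ge_zero[of w]] Re_w by (simp add: sector_def)
  then show False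
    using hyp[OF z0] by (simp add: w_def C_def)
qed

lemma weighted_am_gm_powr:
  fixes \<mu> a :: real
  defines "l \<equiv> (1 + \<mu>) / 2"
  assumes "0 < \<mu>" "\<mu> < 1" "0 < a"
  shows "2 / ((1 + \<mu>) powr l * (1 - \<mu>) powr (1 - l)) \<le> a powr (1 - \<mu>) + a powr (-1 - \<mu>)"
proof -
  define A where "A = 2 * a powr (1 - \<mu>) / (1 + \<mu>)"
  define B where "B = 2 * a powr (-1 - \<mu>) / (1 - \<mu>)"
  have l1: "1 - l = (1 - \<mu>) / 2"
    by (simp add: l_def field_simps)
  have "A powr l * B powr (1 - l) \<le> l * A + (1 - l) * B"
    using Youngs_inequality_0[of l "1 - l" A B] assms by (auto simp: l_def A_def B_def)
  also have "\<dots> = a powr (1 - \<mu>) + a powr (-1 - \<mu>)"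
    using assms unfolding l1 by (simp add: l_def A_def B_def)
  finally have Y: "A powr l * B powr (1 - l) \<le> a powr (1 - \<mu>) + a powr (-1 - \<mu>)" .
  \<comment> \<open>the weights are chosen so that the powers of a cancel in the geometric mean\<close>
  have "(1 - \<mu>) * l + (-1 - \<mu>) * (1 - l) = 0"
    by (simp add: l1 l_def field_simps)
  then have "a powr ((1 - \<mu>) * l) * a powr ((-1 - \<mu>) * (1 - l)) = 1"
    using assms by (simp flip: powr_add)
  moreover have "2 powr l * 2 powr (1 - l) = (2::real)"
    by (simp flip: powr_add)
  moreover have "A powr l * B powr (1 - l) = (2 powr l * 2 powr (1 - l))
      * (a powr ((1 - \<mu>) * l) * a powr ((-1 - \<mu>) * (1 - l))) / ((1 + \<mu>) powr l * (1 - \<mu>) powr (1 - l))"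
    using assms by (simp add: A_def B_def powr_divide powr_mult powr_powr)
  ultimately show ?thesis
    using Y by simp
qed

lemma powr_mult_phi_constant_le:
  fixes \<mu> a :: real
  assumes "0 < \<mu>" "\<mu> < 1" "0 < a"
  shows "a powr \<mu> * (1 / (1 - \<mu>) * ((1 - \<mu>) / (1 + \<mu>)) powr ((1 + \<mu>) / 2)) \<le> (a + 1 / a) / 2"
proof -
  define l where "l = (1 + \<mu>) / 2"
  have "((1 - \<mu>) / (1 + \<mu>)) powr l = (1 - \<mu>) powr l / (1 + \<mu>) powr l"
    "(1 - \<mu>) powr l = (1 - \<mu>) * (1 - \<mu>) powr (l - 1)"
    "(1 - \<mu>) powr (1 - l) = 1 / (1 - \<mu>) powr (l - 1)"
    using assms by (simp_all add: powr_divide powr_diff)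
  then have K: "1 / (1 - \<mu>) * ((1 - \<mu>) / (1 + \<mu>)) powr l = 1 / ((1 + \<mu>) powr l * (1 - \<mu>) powr (1 - l))"
    using assms by simp
  have "a powr (1 - \<mu>) = a / a powr \<mu>" "a powr (-1 - \<mu>) = (1 / a) / a powr \<mu>"
    using assms by (simp_all add: powr_diff powr_minus_divide)
  then have "a powr (1 - \<mu>) + a powr (-1 - \<mu>) = (a + 1 / a) / a powr \<mu>"
    by (simp add: add_divide_distrib)
  then have "2 / ((1 + \<mu>) powr l * (1 - \<mu>) powr (1 - l)) \<le> (a + 1 / a) / a powr \<mu>"
    using weighted_am_gm_powr[OF assms] by (simp add: l_def)
  then have "a powr \<mu> * (2 / ((1 + \<mu>) powr l * (1 - \<mu>) powr (1 - l))) \<le> a + 1 / a"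
    using assms by (simp add: divide_simps mult.commute)
  then show ?thesis
    using K by (simp add: l_def)
qed

lemma phi_le_exit_angle:
  fixes n :: nat and \<mu> a k :: real
  defines "A \<equiv> a powr \<mu>" and "c \<equiv> pi / 2 * \<mu>"
  assumes "0 < a" and k: "real n * (a + 1 / a) / 2 \<le> k" and \<mu>: "0 < \<mu>" "\<mu> \<le> 1"
  shows "phi n \<mu> \<le> c + (pi / 2 - arctan (A * cos c / (A * sin c + k * \<mu>)))"
proof -
  define C where "C = real n * \<mu> / (1 - \<mu>) * ((1 - \<mu>) / (1 + \<mu>)) powr ((1 + \<mu>) / 2)"
  have "0 \<le> real n * (a + 1 / a) / 2"
    using \<open>0 < a\<close> by simp
  then have "0 \<le> k"
    using k by linarith
  have "0 \<le> C" "0 < A"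
    using \<mu> \<open>0 < a\<close> by (auto simp: C_def A_def)
  have "0 < c" "c \<le> pi / 2"
    using \<mu> mult_left_mono[OF \<mu>(2), of "pi / 2"] by (simp_all add: c_def)
  then have "0 \<le> cos c" "0 < sin c"
    by (auto intro!: cos_ge_zero sin_gt_zero)
  \<comment> \<open>for \<mu> = 1 the constant C vanishes, because division by zero yields 0\<close>
  have "A * C \<le> k * \<mu>"
  proof (cases "\<mu> < 1")
    case True
    have "A * C = real n * \<mu> * (a powr \<mu> * (1 / (1 - \<mu>) * ((1 - \<mu>) / (1 + \<mu>)) powr ((1 + \<mu>) / 2)))"
      by (simp add: A_def C_def)
    also have "\<dots> \<le> real n * \<mu> * ((a + 1 / a) / 2)"
      using powr_mult_phi_constant_le[OF \<mu>(1) True \<open>0 < a\<close>] \<mu> by (intro mult_left_mono) auto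
    also have "\<dots> \<le> k * \<mu>"
      using k \<mu> by (simp add: mult.commute mult_right_mono)
    finally show ?thesis .
  qed (use \<mu> \<open>0 \<le> k\<close> in \<open>simp add: C_def\<close>)
  moreover have pos: "0 < A * sin c + A * C"
    using \<open>0 < A\<close> \<open>0 \<le> C\<close> \<open>0 < sin c\<close> by (simp add: add_pos_nonneg)
  ultimately have "A * cos c / (A * sin c + k * \<mu>) \<le> A * cos c / (A * sin c + A * C)"
    using \<open>0 < A\<close> \<open>0 \<le> cos c\<close> by (intro divide_left_mono mult_pos_pos) auto
  also have "\<dots> = cos c / (sin c + C)"
    using \<open>0 < A\<close> by (simp add: distrib_left[symmetric])
  finally have "arctan (A * cos c / (A * sin c + k * \<mu>)) \<le> arctan (cos c / (sin c + C))"
    by (rule arctan_monotone')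
  moreover have "\<mu> * pi / 2 = c"
    by (simp add: c_def)
  then have "phi n \<mu> = pi / 2 * (\<mu> + 1) - arctan (cos c / (sin c + C))"
    by (simp only: phi_def C_def)
  moreover have "pi / 2 * (\<mu> + 1) = c + pi / 2"
    by (simp add: c_def distrib_left)
  ultimately show ?thesis
    by linarith
qed

lemma Complex_eq_polar_arctan:
  assumes "0 < y"
  shows "Complex x y = of_real (sqrt (x\<^sup>2 + y\<^sup>2)) * cis (pi / 2 - arctan (x / y))"
proof -
  have "sqrt (1 + (x / y)\<^sup>2) = sqrt (x\<^sup>2 + y\<^sup>2) / y"
    using assms by (simp add: field_simps power2_eq_square real_sqrt_divide flip: real_sqrt_mult)
  then show ?thesis
    using assms
    by (simp add: complex_eq_iff cos_diff sin_diff sin_arctan cos_arctan add_pos_nonneg)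
qed

lemma Re_eq_norm_cos_cis_plus_i:
  fixes A c t s :: real and u :: complex
  assumes s: "s = 1 \<or> s = -1" and "0 < A" "0 \<le> t" "0 < c" "c \<le> pi / 2" "u \<noteq> 0"
  defines "\<theta> \<equiv> pi / 2 - arctan (A * cos c / (A * sin c + t))"
  shows "Re (u * (of_real A * cis (s * c) * (of_real A * cis (s * c) + \<i> * of_real (s * t))))
       = cmod (u * (of_real A * cis (s * c) * (of_real A * cis (s * c) + \<i> * of_real (s * t))))
         * cos (s * Arg u + c + \<theta>)"
proof -
  define R where "R = sqrt ((A * cos c)\<^sup>2 + (A * sin c + t)\<^sup>2)"
  have "0 < A * sin c + t"
    using assms sin_gt_zero[of c] by (simp add: add_pos_nonneg)
  then have "Complex (A * cos c) (A * sin c + t) = of_real R * cis \<theta>" "0 < R"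
    using Complex_eq_polar_arctan[of "A * sin c + t" "A * cos c"]
    by (simp_all add: R_def \<theta>_def add_nonneg_pos)
  then have X: "of_real A * cis (s * c) + \<i> * of_real (s * t) = of_real R * cis (s * \<theta>)"
    using s by (auto simp: complex_eq_iff algebra_simps)
  define K where "K = cmod u * A * R"
  have "u = of_real (cmod u) * cis (Arg u)"
    using rcis_cmod_Arg[of u] by (simp add: rcis_def)
  then have "u * (of_real A * cis (s * c) * (of_real A * cis (s * c) + \<i> * of_real (s * t)))
      = of_real K * cis (Arg u + s * c + s * \<theta>)"
    unfolding X K_def by (simp add: cis_mult[symmetric] mult_ac)
  moreover have "cos (Arg u + s * c + s * \<theta>) = cos (s * Arg u + c + \<theta>)"
    using s cos_minus[of "Arg u - c - \<theta>"] by (auto simp: algebra_simps)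
  moreover have "0 < K"
    using assms \<open>0 < R\<close> by (simp add: K_def)
  ultimately show ?thesis
    by (simp add: norm_mult)
qed

lemma add_le_two_of_le_phi:
  assumes "pi / 2 * (\<alpha> + \<gamma>) \<le> phi n \<mu>" "0 < \<mu>" "\<mu> \<le> 1"
  shows "\<alpha> + \<gamma> \<le> 2"
proof -
  have "0 < \<mu> * pi / 2" "\<mu> * pi / 2 \<le> pi / 2" "pi / 2 < pi"
    using assms mult_right_mono[OF assms(3), of "pi / 2"] by auto
  then have "0 \<le> cos (\<mu> * pi / 2)" "0 < sin (\<mu> * pi / 2)"
    by (intro cos_ge_zero sin_gt_zero; linarith)+
  then have "phi n \<mu> \<le> pi / 2 * (\<mu> + 1)"
    using assms by (simp add: phi_def add_pos_nonneg)
  also have "\<dots> \<le> pi / 2 * 2"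
    using assms by (intro mult_left_mono) simp_all
  finally have "pi / 2 * (\<alpha> + \<gamma>) \<le> pi / 2 * 2"
    using assms(1) by linarith
  then show ?thesis
    by (simp only: mult_le_cancel_left_pos pi_half_gt_zero)
qed

lemma cos_le_of_angle_bounds:
  assumes "\<bar>x\<bar> < pi / 2 * \<gamma>" "pi / 2 * (\<alpha> + \<gamma>) \<le> y" "y \<le> pi" "\<alpha> + \<gamma> \<le> 2" "0 < \<alpha>"
  shows "cos (x + y) \<le> cos (pi / 2 * \<alpha>)"
proof (rule cos_le_cos_outside)
  have "pi / 2 * (\<alpha> + \<gamma>) \<le> pi / 2 * 2"
    using assms(4) by (intro mult_left_mono) simp_all
  moreover have "pi / 2 * (\<alpha> + \<gamma>) = pi / 2 * \<alpha> + pi / 2 * \<gamma>"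
    by (simp add: distrib_left)
  moreover have "0 < pi / 2 * \<alpha>"
    using assms(5) by simp
  ultimately show "0 \<le> pi / 2 * \<alpha>" "pi / 2 * \<alpha> \<le> pi" "pi / 2 * \<alpha> \<le> x + y" "x + y \<le> 2 * pi - pi / 2 * \<alpha>"
    using assms(1-3) by (simp_all only: abs_less_iff) linarith+
qed

lemma sector_of_quotient_from_phi:
  fixes p2 p3 q :: "complex \<Rightarrow> complex" and \<alpha> \<gamma> \<mu> :: real
  assumes p2: "\<And>z. z \<in> ball 0 1 \<Longrightarrow> p2 z \<in> sector (pi / 2 * \<gamma>)"
    and hp3: "p3 holomorphic_on ball 0 1" and hq: "q holomorphic_on ball 0 1"
    and pq: "\<And>z. z \<in> ball 0 1 \<Longrightarrow> p3 z = 1 + z ^ n * q z"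
    and p3_nz: "\<And>z. z \<in> ball 0 1 \<Longrightarrow> p3 z \<noteq> 0"
    and hyp: "\<And>z. z \<in> ball 0 1 \<Longrightarrow> p2 z * (p3 z ^ 2 + z * deriv p3 z) \<in> sector (pi / 2 * \<alpha>)"
    and "n \<ge> 1" "0 < \<alpha>" "0 < \<gamma>" and \<mu>: "0 < \<mu>" "\<mu> \<le> 1"
    and phi: "pi / 2 * (\<alpha> + \<gamma>) \<le> phi n \<mu>" and "z \<in> ball 0 1"
  shows "p3 z \<in> sector (pi / 2 * \<mu>)"
proof (rule ccontr)
  define c where "c = pi / 2 * \<mu>"
  assume "p3 z \<notin> sector (pi / 2 * \<mu>)"
  then have "p3 z \<notin> sector (pi * \<mu> / 2)"
    by (simp add: field_simps)
  then obtain z0 a s k where z0: "z0 \<in> ball 0 1" and "0 < a" and s: "s = 1 \<or> s = -1"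
    and k: "real n * (a + 1 / a) / 2 \<le> k"
    and pz0: "p3 z0 = of_real (a powr \<mu>) * cis (s * c)"
    and dz0: "z0 * deriv p3 z0 = p3 z0 * (\<i> * of_real (s * (k * \<mu>)))"
    using nunokawa[OF hp3 hq pq \<open>n \<ge> 1\<close> \<mu> disjI2 \<open>z \<in> ball 0 1\<close>] p3_nz
    by (simp add: c_def mult.commute mult.left_commute) blast
  define A where "A = a powr \<mu>"
  define \<theta> where "\<theta> = pi / 2 - arctan (A * cos c / (A * sin c + k * \<mu>))"
  define w where "w = p2 z0 * (p3 z0 ^ 2 + z0 * deriv p3 z0)"
  have "0 \<le> real n * (a + 1 / a) / 2"
    using \<open>0 < a\<close> by simp
  then have "0 \<le> k"
    using k by linarith
  then have "0 \<le> k * \<mu>" "0 < A"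
    using \<mu> \<open>0 < a\<close> by (simp_all add: A_def)
  have c: "0 < c" "c \<le> pi / 2"
    using \<mu> mult_left_mono[OF \<mu>(2), of "pi / 2"] by (simp_all add: c_def)
  have "w = p2 z0 * (of_real A * cis (s * c) * (of_real A * cis (s * c) + \<i> * of_real (s * (k * \<mu>))))"
    unfolding w_def dz0 pz0 A_def by (simp add: power2_eq_square algebra_simps)
  then have Re_w: "Re w = cmod w * cos (s * Arg (p2 z0) + c + \<theta>)"
    using Re_eq_norm_cos_cis_plus_i[OF s \<open>0 < A\<close> \<open>0 \<le> k * \<mu>\<close> c sector_nonzero[OF p2[OF z0]]]
    by (simp add: \<theta>_def)
  have "phi n \<mu> \<le> c + \<theta>"
    using phi_le_exit_angle[OF \<open>0 < a\<close> k \<mu>] by (simp add: \<theta>_def A_def c_def)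
  moreover have "\<theta> \<le> pi / 2"
    using \<open>0 < A\<close> \<open>0 \<le> k * \<mu>\<close> c cos_ge_zero[of c] sin_gt_zero[of c]
    by (simp add: \<theta>_def add_pos_nonneg)
  moreover have "\<alpha> + \<gamma> \<le> 2"
    using add_le_two_of_le_phi[OF phi \<mu>] .
  then have "\<bar>Arg (p2 z0)\<bar> < pi / 2 * \<gamma>"
    using p2[OF z0] mem_sector_iff_Arg[of "pi / 2 * \<gamma>"] \<open>0 < \<alpha>\<close> \<open>0 < \<gamma>\<close> by simp
  then have "\<bar>s * Arg (p2 z0)\<bar> < pi / 2 * \<gamma>"
    using s by auto
  ultimately have cos_le: "cos (s * Arg (p2 z0) + c + \<theta>) \<le> cos (pi / 2 * \<alpha>)"
    using cos_le_of_angle_bounds[of "s * Arg (p2 z0)" \<gamma> \<alpha> "c + \<theta>"] phi c(2) \<open>\<alpha> + \<gamma> \<le> 2\<close> \<open>0 < \<alpha>\<close>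
    by (simp add: add.assoc)
  have "w \<notin> sector (pi / 2 * \<alpha>)"
    using mult_left_mono[OF cos_le norm_ge_zero[of w]] Re_w by (simp add: sector_def)
  then show False
    using hyp[OF z0] by (simp add: w_def)
qed

section \<open>Strongly starlike functions\<close>

lemma holomorphic_factor_power_at_0:
  fixes F :: "complex \<Rightarrow> complex"
  assumes holf: "F holomorphic_on ball 0 r"
      and dfz: "\<And>i. i < m \<Longrightarrow> (deriv ^^ i) F 0 = 0"
  obtains g where "g holomorphic_on ball 0 r" "\<And>w. w \<in> ball 0 r \<Longrightarrow> F w = w^m * g w"
proof -
  define g where "g w = suminf (\<lambda>i. (deriv ^^ (i + m)) F 0 / (fact(i + m)) * w^i)" for w
  have sumsg: "(\<lambda>i. (deriv ^^ (i + m)) F 0 / (fact(i + m)) * w^i) sums g w"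
   and feq: "F w = w^m * g w"
       if w: "w \<in> ball 0 r" for w
  proof -
    define powf where "powf = (\<lambda>i. (deriv ^^ i) F 0/(fact i) * w^i)"
    have "powf sums F w"
      unfolding powf_def using holomorphic_power_series [OF holf w] by simp
    moreover have "(\<Sum>i<m. powf i) = 0"
      by (rule sum.neutral) (simp add: powf_def dfz)
    ultimately have fsums: "(\<lambda>i. powf (i+m)) sums F w"
      using w sums_iff_shift'[of powf m "F w"] by simp
    then have *: "summable (\<lambda>i. w ^ m * ((deriv ^^ (i + m)) F 0 * w ^ i / fact (i + m)))"
      unfolding powf_def using sums_summable
      by (auto simp: power_add mult_ac)
    have "summable (\<lambda>i. (deriv ^^ (i + m)) F 0 * w ^ i / fact (i + m))"
    proof (cases "w=0")
      case False then show ?thesis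
        using summable_mult [OF *, of "1 / w ^ m"] by simp
    next
      case True then show ?thesis
        by (auto simp: Power.semiring_1_class.power_0_left intro!: summable_finite [of "{0}"]
                 split: if_split_asm)
    qed
    then show sumsg: "(\<lambda>i. (deriv ^^ (i + m)) F 0 / (fact(i + m)) * w^i) sums g w"
      by (simp add: summable_sums_iff g_def)
    show "F w = w^m * g w"
      using sums_mult [OF sumsg, of "w ^ m"]
      by (intro sums_unique2 [OF fsums]) (auto simp: power_add mult_ac powf_def)
  qed
  have "g holomorphic_on ball 0 r"
    using sumsg power_series_holomorphic[of 0 r "\<lambda>i. (deriv ^^ (i + m)) F 0 / (fact(i + m))" g] by simp
  then show ?thesis using that feq by blast
qed

lemma deriv_z_mult:
  assumes "g holomorphic_on S" "open S" "z \<in> S" "\<And>w. w \<in> S \<Longrightarrow> f w = w * g w"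
  shows "deriv f z = g z + z * deriv g z"
proof -
  have "((\<lambda>w. w * g w) has_field_derivative 1 * g z + deriv g z * z) (at z)"
    using holomorphic_derivI[OF assms(1-3)] by (intro DERIV_mult DERIV_ident)
  then have "(f has_field_derivative 1 * g z + deriv g z * z) (at z)"
    using assms(2,3) by (rule has_field_derivative_transform_within_open) (simp add: assms(4))
  then show ?thesis
    by (simp add: DERIV_imp_deriv mult.commute)
qed

lemma z_mult_deriv_one_plus_power:
  assumes "h holomorphic_on S" "open S" "z \<in> S"
  shows "z * deriv (\<lambda>w. 1 + w ^ n * h w) z = z ^ n * (of_nat n * h z + z * deriv h z)"
proof -
  have "((\<lambda>w. 1 + w ^ n * h w) has_field_derivative
      0 + (of_nat n * (1 * z ^ (n - Suc 0)) * h z + deriv h z * z ^ n)) (at z)"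
    using holomorphic_derivI[OF assms] by (intro DERIV_add DERIV_const DERIV_mult DERIV_power DERIV_ident)
  then have "deriv (\<lambda>w. 1 + w ^ n * h w) z = of_nat n * z ^ (n - Suc 0) * h z + deriv h z * z ^ n"
    by (simp add: DERIV_imp_deriv)
  moreover have "z * (of_nat n * z ^ (n - Suc 0)) = of_nat n * z ^ n"
    by (cases n) simp_all
  ultimately show ?thesis
    by (auto simp: algebra_simps)
qed

lemma deriv_plus_z_second_deriv_eq:
  assumes "open S" "p2 holomorphic_on S" "p3 holomorphic_on S" "z \<in> S"
    and f': "\<And>w. w \<in> S \<Longrightarrow> deriv f w = p2 w * p3 w"
    and p2: "\<And>w. w \<in> S \<Longrightarrow> w * deriv p2 w = p2 w * (p3 w - 1)"
  shows "deriv f z + z * deriv (deriv f) z = p2 z * (p3 z ^ 2 + z * deriv p3 z)"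
proof -
  have "((\<lambda>w. p2 w * p3 w) has_field_derivative deriv p2 z * p3 z + deriv p3 z * p2 z) (at z)"
    using holomorphic_derivI[OF assms(2,1,4)] holomorphic_derivI[OF assms(3,1,4)] by (rule DERIV_mult)
  then have "(deriv f has_field_derivative deriv p2 z * p3 z + deriv p3 z * p2 z) (at z)"
    using assms(1,4) by (rule has_field_derivative_transform_within_open) (simp add: f')
  then have "deriv f z + z * deriv (deriv f) z
      = p2 z * p3 z + (z * deriv p2 z) * p3 z + p2 z * (z * deriv p3 z)"
    using f'[OF assms(4)] by (simp add: DERIV_imp_deriv algebra_simps)
  also have "\<dots> = p2 z * (p3 z ^ 2 + z * deriv p3 z)"
    unfolding p2[OF assms(4)] by (simp add: algebra_simps power2_eq_square)
  finally show ?thesis .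
qed

lemma class_A_factor:
  assumes "f \<in> class_A n"
  obtains h where "h holomorphic_on ball 0 1" "\<And>z. z \<in> ball 0 1 \<Longrightarrow> f z = z * (1 + z ^ n * h z)"
proof -
  have hf: "f holomorphic_on ball 0 1"
    using assms by (simp add: class_A_def)
  then have hF: "(\<lambda>w. f w - w) holomorphic_on ball 0 1"
    by (intro holomorphic_intros)
  have "(deriv ^^ i) (\<lambda>w. f w - w) 0 = 0" if "i < n + 1" for i
  proof -
    have "(deriv ^^ i) (\<lambda>w. f w - w) 0 = (deriv ^^ i) f 0 - (deriv ^^ i) (\<lambda>w. w) 0"
      by (rule higher_deriv_diff[OF hf _ open_ball]) (auto intro: holomorphic_intros)
    moreover have "(deriv ^^ i) f 0 = (deriv ^^ i) (\<lambda>w. w) 0"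
      using assms that by (cases "i \<le> 1") (auto simp: class_A_def le_Suc_eq)
    ultimately show ?thesis
      by simp
  qed
  then obtain h where "h holomorphic_on ball 0 1"
    and h: "\<And>w. w \<in> ball 0 1 \<Longrightarrow> f w - w = w ^ (n + 1) * h w"
    using holomorphic_factor_power_at_0[OF hF] by blast
  moreover have "f z = z * (1 + z ^ n * h z)" if "z \<in> ball 0 1" for z
    using h[OF that] by (simp add: algebra_simps)
  ultimately show ?thesis
    using that by blast
qed

lemma class_A_decomposition:
  assumes "f \<in> class_A n"
  obtains p h q where "p holomorphic_on ball 0 1" "h holomorphic_on ball 0 1" "q holomorphic_on ball 0 1"
    "\<And>z. z \<in> ball 0 1 \<Longrightarrow> p z = 1 + z ^ n * h z"
    "\<And>z. z \<in> ball 0 1 \<Longrightarrow> f z = z * p z"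
    "\<And>z. z \<in> ball 0 1 \<Longrightarrow> z * deriv p z = z ^ n * q z"
    "\<And>z. z \<in> ball 0 1 \<Longrightarrow> deriv f z = p z + z * deriv p z"
proof -
  obtain h where h: "h holomorphic_on ball 0 1" and fh: "\<And>z. z \<in> ball 0 1 \<Longrightarrow> f z = z * (1 + z ^ n * h z)"
    using class_A_factor[OF assms] by blast
  define p where "p w = 1 + w ^ n * h w" for w
  have "p holomorphic_on ball 0 1" "(\<lambda>w. of_nat n * h w + w * deriv h w) holomorphic_on ball 0 1"
    unfolding p_def using holomorphic_deriv[OF h open_ball] by (auto intro!: holomorphic_intros h)
  moreover have "z * deriv p z = z ^ n * (of_nat n * h z + z * deriv h z)" if "z \<in> ball 0 1" for z
    unfolding p_def[abs_def] using z_mult_deriv_one_plus_power[OF h open_ball that] .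
  moreover have "deriv f z = p z + z * deriv p z" if "z \<in> ball 0 1" for z
    using deriv_z_mult[OF \<open>p holomorphic_on _\<close> open_ball that] fh by (simp add: p_def)
  ultimately show ?thesis
    using that h fh by (simp add: p_def)
qed

lemma quotient_decomposition:
  assumes f: "f holomorphic_on ball 0 1" and p: "p holomorphic_on ball 0 1" "q holomorphic_on ball 0 1"
    and p_nz: "\<And>z. z \<in> ball 0 1 \<Longrightarrow> p z \<noteq> 0"
    and zp: "\<And>z. z \<in> ball 0 1 \<Longrightarrow> z * deriv p z = z ^ n * q z"
    and f': "\<And>z. z \<in> ball 0 1 \<Longrightarrow> deriv f z = p z + z * deriv p z"
  defines "r \<equiv> \<lambda>z. deriv f z / p z"
  shows "r holomorphic_on ball 0 1" "(\<lambda>z. q z / p z) holomorphic_on ball 0 1"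
    "\<And>z. z \<in> ball 0 1 \<Longrightarrow> r z = 1 + z ^ n * (q z / p z)"
    "\<And>z. z \<in> ball 0 1 \<Longrightarrow> deriv f z + z * deriv (deriv f) z = p z * (r z ^ 2 + z * deriv r z)"
proof -
  show hr: "r holomorphic_on ball 0 1"
    unfolding r_def using p_nz holomorphic_deriv[OF f open_ball] p by (auto intro!: holomorphic_intros)
  show "(\<lambda>z. q z / p z) holomorphic_on ball 0 1"
    using p_nz p by (auto intro!: holomorphic_intros)
  show "r z = 1 + z ^ n * (q z / p z)" if "z \<in> ball 0 1" for z
    using f'[OF that] zp[OF that] p_nz[OF that] by (simp add: r_def field_simps)
  show "deriv f z + z * deriv (deriv f) z = p z * (r z ^ 2 + z * deriv r z)" if "z \<in> ball 0 1" for z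
  proof (rule deriv_plus_z_second_deriv_eq[OF open_ball p(1) hr that])
    show "deriv f u = p u * r u" if "u \<in> ball 0 1" for u
      using p_nz[OF that] by (simp add: r_def)
    show "u * deriv p u = p u * (r u - 1)" if "u \<in> ball 0 1" for u
      using f'[OF that] p_nz[OF that] by (simp add: r_def right_diff_distrib)
  qed
qed

lemma mem_STS_of_quotient_in_sector:
  assumes "f \<in> class_A n" "0 < \<mu>" "\<mu> \<le> 1"
    and f: "\<And>z. z \<in> ball 0 1 \<Longrightarrow> f z = z * p z" and p_nz: "\<And>z. z \<in> ball 0 1 \<Longrightarrow> p z \<noteq> 0"
    and sec: "\<And>z. z \<in> ball 0 1 \<Longrightarrow> deriv f z / p z \<in> sector (pi / 2 * \<mu>)"
  shows "f \<in> STS n \<mu>"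
  unfolding STS_def
proof (intro CollectI conjI ballI impI assms(1))
  fix z :: complex
  assume z: "z \<in> ball 0 1" "z \<noteq> 0"
  then have "z * deriv f z / f z = deriv f z / p z" "f z \<noteq> 0"
    using f[OF z(1)] p_nz[OF z(1)] by simp_all
  moreover have "0 < pi / 2 * \<mu>" "pi / 2 * \<mu> \<le> pi"
    using assms(2,3) mult_left_mono[OF assms(3), of "pi / 2"] by simp_all
  ultimately show "f z \<noteq> 0" "z * deriv f z / f z \<noteq> 0" "\<bar>Arg (z * deriv f z / f z)\<bar> < pi / 2 * \<mu>"
    using sec[OF z(1)] mem_sector_iff_Arg by auto
qed

lemma arctan_iteration_bounds:
  fixes \<alpha> \<beta> \<gamma> :: real
  assumes "n \<ge> 1" "0 < \<gamma>" "\<alpha> + \<gamma> \<le> 2"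
    and \<alpha>: "\<alpha> = \<beta> + 2 / pi * arctan (real n * \<beta>)"
    and \<beta>: "\<beta> = \<gamma> + 2 / pi * arctan (real n * \<gamma>)"
  shows "0 < \<beta>" "\<beta> < 1" "\<gamma> < 1"
proof -
  have "0 < 2 / pi * arctan (real n * \<gamma>)"
    using assms(1,2) by simp
  then have "\<gamma> < \<beta>"
    using \<beta> by linarith
  then show "0 < \<beta>"
    using \<open>0 < \<gamma>\<close> by linarith
  show "\<beta> < 1"
  proof (rule ccontr)
    assume "\<not> \<beta> < 1"
    then have "arctan (real n) \<le> arctan (real n * \<beta>)"
      by (intro arctan_monotone') (simp add: mult_le_cancel_left1)
    then have "1 + 2 / pi * arctan (real n) \<le> \<alpha>"
      using \<alpha> \<open>\<not> \<beta> < 1\<close> mult_left_mono[of _ _ "2 / pi"] by fastforce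
    moreover have "0 < 2 / pi * arctan (real n)"
      using assms(1) by simp
    moreover have "2 / pi * arctan (real n * \<gamma>) < 2 / pi * arctan (real n)" if "\<gamma> < 1"
      using that assms(1,2) by (intro mult_strict_left_mono arctan_monotone) simp_all
    ultimately show False
      using \<beta> \<open>\<alpha> + \<gamma> \<le> 2\<close> \<open>\<not> \<beta> < 1\<close> by (cases "\<gamma> < 1") linarith+
  qed
  then show "\<gamma> < 1"
    using \<open>\<gamma> < \<beta>\<close> by simp
qed

theorem theorem1:
  fixes n :: nat and \<alpha> \<beta> \<gamma> \<mu> :: real and f :: "complex \<Rightarrow> complex"
  assumes "n \<ge> 1"
    and "\<alpha> > 0" and "\<gamma> > 0" and "0 < \<mu>" and "\<mu> \<le> 1"
    and "\<alpha> = \<beta> + 2 / pi * arctan (real n * \<beta>)"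
    and "\<beta> = \<gamma> + 2 / pi * arctan (real n * \<gamma>)"
    and "pi / 2 * (\<alpha> + \<gamma>) \<le> phi n \<mu>"
    and "f \<in> class_A n"
    and "\<forall>z\<in>ball 0 1. deriv f z + z * (deriv ^^ 2) f z \<noteq> 0 \<and>
                       \<bar>Arg (deriv f z + z * (deriv ^^ 2) f z)\<bar> < pi / 2 * \<alpha>"
  shows "f \<in> STS n \<mu>"
proof -
  note n = assms(1) and \<mu> = assms(4,5)
  have "\<alpha> + \<gamma> \<le> 2"
    using add_le_two_of_le_phi[OF assms(8) \<mu>] .
  then have \<beta>: "0 < \<beta>" "\<beta> < 1" and "\<gamma> < 1" "\<alpha> < 2"
    using arctan_iteration_bounds[OF n assms(3) _ assms(6,7)] assms(3) by auto
  have hf: "f holomorphic_on ball 0 1"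
    using assms(9) by (simp add: class_A_def)
  obtain p h q where hp: "p holomorphic_on ball 0 1" and hh: "h holomorphic_on ball 0 1"
      and hq: "q holomorphic_on ball 0 1" and ph: "\<And>z. z \<in> ball 0 1 \<Longrightarrow> p z = 1 + z ^ n * h z"
      and fp: "\<And>z. z \<in> ball 0 1 \<Longrightarrow> f z = z * p z"
      and zp: "\<And>z. z \<in> ball 0 1 \<Longrightarrow> z * deriv p z = z ^ n * q z"
      and f': "\<And>z. z \<in> ball 0 1 \<Longrightarrow> deriv f z = p z + z * deriv p z"
    using class_A_decomposition[OF assms(9)] by blast
  have hyp: "deriv f z + z * deriv (deriv f) z \<in> sector (pi / 2 * \<alpha>)" if "z \<in> ball 0 1" for z
    using assms(10) that mem_sector_iff_Arg[of "pi / 2 * \<alpha>"] assms(2) \<open>\<alpha> < 2\<close>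
    by (simp add: numeral_2_eq_2)
  have S1: "deriv f z \<in> sector (pi / 2 * \<beta>)" if "z \<in> ball 0 1" for z
    using sector_from_p_plus_z_deriv[OF holomorphic_deriv[OF hf open_ball] _ _ n \<beta> _ that, of "\<lambda>z. h z + q z"]
      hh hq f' ph zp hyp assms(6) by (simp add: holomorphic_on_add distrib_left add.assoc)
  then have S2: "p z \<in> sector (pi / 2 * \<gamma>)" if "z \<in> ball 0 1" for z
    using sector_from_p_plus_z_deriv[OF hp hh ph n assms(3) \<open>\<gamma> < 1\<close> _ that] f' assms(7) by simp
  then have p_nz: "p z \<noteq> 0" if "z \<in> ball 0 1" for z
    using that sector_nonzero by blast
  note Q = quotient_decomposition[OF hf hp hq p_nz zp f']
  have "deriv f z / p z \<in> sector (pi / 2 * \<mu>)" if "z \<in> ball 0 1" for z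
  proof (rule sector_of_quotient_from_phi[OF S2 Q(1,2,3) _ _ n assms(2,3) \<mu> assms(8) that])
    show "deriv f w / p w \<noteq> 0" if "w \<in> ball 0 1" for w
      using S1[OF that] p_nz[OF that] sector_nonzero by simp
    show "p w * ((deriv f w / p w)\<^sup>2 + w * deriv (\<lambda>z. deriv f z / p z) w) \<in> sector (pi / 2 * \<alpha>)"
      if "w \<in> ball 0 1" for w
      using Q(4) hyp that by simp
  qed
  then show ?thesis
    using mem_STS_of_quotient_in_sector[OF assms(9) \<mu> fp p_nz] by blast
qed

end
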